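(* Let $\delta\in\{\ast,0,\gamma\}$ and $t\in\mathbb T_\delta$. (a) Let $\mathcal C\subseteq\mathcal R_n^{(q^t)}$ be a cyclic $\mathbb F_q$-linear $\mathbb F_{q^t}$-code of length $n$, and for $0\le i\le s-1$ let $\mathcal C_i=\mathcal C\cap\mathcal J_i$ and $\mathcal C_i^{(\delta)}=\mathcal C^{\perp_\delta}\cap\mathcal J_i$ (so $\mathcal C=\bigoplus_i\mathcal C_i$ and $\mathcal C^{\perp_\delta}=\bigoplus_i\mathcal C_i^{(\delta)}$). Then $\mathcal C$ is $\delta$-complementary-dual if and only if $\mathcal C_i\cap\mathcal C_i^{(\delta)}=\{0\}$ for all $0\le i\le s-1$. (b) For $i\in\mathfrak F\cup\mathfrak I$ let $N_i$ be the number of $\mathcal K_i$-subspaces $\mathcal C_i$ of $\mathcal J_i$ with $\mathcal C_i\cap\mathcal C_i^{(\delta)}=\{0\}$ (where $\mathcal C_i^{(\delta)}=\{a\in\mathcal J_i:[a,c]_\delta=0\ \forall c\in\mathcal C_i\}$). For $h\in\mathfrak M$ let $N_h$ be the number of pairs $(\mathcal C_h,\mathcal C_{\mu(h)})$ of a $\mathcal K_h$-subspace $\mathcal C_h\subseteq\mathcal J_h$ and a $\mathcal K_{\mu(h)}$-subspace $\mathcal C_{\mu(h)}\subseteq\mathcal J_{\mu(h)}$ with $\mathcal C_h\cap\mathcal C_h^{(\delta)}=\{0\}$ and $\mathcal C_{\mu(h)}\cap\mathcal C_{\mu(h)}^{(\delta)}=\{0\}$, where $\mathcal C_h^{(\delta)}=\{a\in\mathcal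 J_h:[a,c]_\delta=0\ \forall c\in\mathcal C_{\mu(h)}\}$ and $\mathcal C_{\mu(h)}^{(\delta)}=\{a\in\mathcal J_{\mu(h)}:[a,c]_\delta=0\ \forall c\in\mathcal C_h\}$. Then the number of distinct $\delta$-complementary-dual cyclic $\mathbb F_q$-linear $\mathbb F_{q^t}$-codes of length $n$ is $\prod_{i\in\mathfrak F\cup\mathfrak I}N_i\prod_{h\in\mathfrak M}N_h$.
   Context: Standing setup. Let $q$ be a power of a prime $p$, $n\ge1$ an integer with $\gcd(n,q)=1$, and $t\ge2$ an integer. Put $\mathcal R_n^{(q)}=\mathbb F_q[X]/\langle X^n-1\rangle\subseteq\mathcal R_n^{(q^t)}=\mathbb F_{q^t}[X]/\langle X^n-1\rangle$. For an integer $\ell$, $C^{(q)}_\ell=\{\ell q^j \bmod n: j\ge0\}$ is the $q$-cyclotomic coset modulo $n$ containing $\ell$. Let $\ell_0=0,\ell_1,\dots,\ell_{s-1}$ be a complete set of representatives of the $q$-cyclotomic cosets modulo $n$, $d_i=|C^{(q)}_{\ell_i}|$, $\eta$ a primitive $n$th root of unity over $\mathbb F_q$, and $f_i(X)=\prod_{k\in C^{(q)}_{\ell_i}}(X-\eta^k)\in\mathbb F_q[X]$. Let $\mathcal K_i$ be the ideal of $\mathcal R_n^{(q)}$ generated by $(X^n-1)/f_i(X)$ (a field isomorphic to $\mathbb F_{q^{d_i}}$) and $\mathcal J_i$ the ideal of $\mathcal R_n^{(q^t)}$ generated by $(X^n-1)/f_i(X)$; under multiplication $\mathcal J_i$ is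 a $t$-dimensional $\mathcal K_i$-vector space. Let $\mu$ be the permutation of $\{0,\dots,s-1\}$ with $C^{(q)}_{-\ell_i}=C^{(q)}_{\ell_{\mu(i)}}$ (an involution with $\mu(0)=0$). Let $\mathfrak I=\{0\}$ if $n$ is odd and $\mathfrak I=\{0,i^\#\}$ if $n$ is even, where $C^{(q)}_{\ell_{i^\#}}=\{n/2\}$; let $\mathfrak F$ be the set of fixed points of $\mu$ not in $\mathfrak I$, and $\mathfrak M$ a set containing exactly one element from each 2-cycle of $\mu$. For integers $u\ge0$ and $v$ with $\gcd(v,n)=1$ let $\tau_{q^u,v}(\sum_i a_iX^i)=\sum_i a_i^{q^u}X^{vi}$ on $\mathcal R_n^{(q^t)}$. Define forms $\mathcal R_n^{(q^t)}\times\mathcal R_n^{(q^t)}\to\mathcal R_n^{(q)}$: (ordinary, $\delta=0$) $[a,b]_0=\sum_{w=0}^{t-1}\tau_{q^w,1}(a\,\tau_{1,-1}(b))$; (Hermitian, $\delta=\gamma$, $t$ even) writing $t=2^em$ with $e\ge1$, $m$ odd, and fixing a nonzero $\gamma\in\mathbb F_{q^{2^e}}$ with $\gamma+\gamma^{q^{2^{e-1}}}=0$, $[a,b]_\gamma=\sum_{w=0}^{t-1}\tau_{q^w,1}(\gamma a\,\tau_{q^{t/2},-1}(b))$; ($\delta=\ast$, $t\not\equiv1\pmod p$) $[a,b]_\ast=\sum_{u=0}^{t-1}\tau_{q^u,1}\big(a\sum_{w=1}^{t-1}\tau_{q^w,-1}(b)\big)$. $\mathbb T_\ast$ is the set of integers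 $t\ge2$ with $t\not\equiv1\pmod p$, $\mathbb T_0$ the set of all integers $t\ge2$, $\mathbb T_\gamma$ the set of even integers $t\ge2$. Under the identification $(a_0,\dots,a_{n-1})\leftrightarrow\sum a_iX^i$ these correspond to the $\mathbb F_q$-valued forms on $\mathbb F_{q^t}^n$: $(a,b)_0=\sum_j\mathrm{Tr}(a_jb_j)$, $(a,b)_\gamma=\sum_j\mathrm{Tr}(\gamma a_jb_j^{q^{t/2}})$, $(a,b)_\ast=\sum_j\mathrm{Tr}(a_j\phi(b_j))$ with $\phi(\alpha)=\alpha^q+\alpha^{q^2}+\dots+\alpha^{q^{t-1}}$ and $\mathrm{Tr}$ the trace $\mathbb F_{q^t}\to\mathbb F_q$. An $\mathbb F_q$-linear $\mathbb F_{q^t}$-code of length $n$ is an $\mathbb F_q$-subspace $\mathcal C\subseteq\mathbb F_{q^t}^n$; it is cyclic if closed under the cyclic shift; cyclic codes are identified with $\mathcal R_n^{(q)}$-submodules of $\mathcal R_n^{(q^t)}$. Its $\delta$-dual is $\mathcal C^{\perp_\delta}=\{v:(v,c)_\delta=0\ \forall c\in\mathcal C\}$, and $\mathcal C$ is $\delta$-complementary-dual if $\mathcal C\cap\mathcal C^{\perp_\delta}=\{0\}$. *)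

theory Defs
  imports "HOL-Computational_Algebra.Computational_Algebra"
begin

text \<open>Everything lives inside one ambient field 'e of characteristic p.
  F_{q^t} is the subfield of roots of X^(q^t) - X, F_q that of X^q - X.
  Elements of R_n (vectors of length n) are functions nat => 'e vanishing at indices >= n;
  the vector (a_0,..,a_{n-1}) corresponds to sum a_i X^i.\<close>

datatype 'a form_kind = Star | Ord | Herm 'a

definition Fsub :: "nat \<Rightarrow> 'a::comm_ring_1 set" where
  "Fsub r = {x. x ^ r = x}"

definition zvec :: "nat \<Rightarrow> 'a::zero" where
  "zvec = (\<lambda>_. 0)"

definition vecs :: "'a::zero set \<Rightarrow> nat \<Rightarrow> (nat \<Rightarrow> 'a) set" where
  "vecs F n = {a. (\<forall>k<n. a k \<in> F) \<and> (\<forall>k\<ge>n. a k = 0)}"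

definition rmul :: "nat \<Rightarrow> (nat \<Rightarrow> 'a::comm_ring_1) \<Rightarrow> (nat \<Rightarrow> 'a) \<Rightarrow> nat \<Rightarrow> 'a" where
  "rmul n a b = (\<lambda>k. if k < n then (\<Sum>i<n. \<Sum>j<n. if (i + j) mod n = k then a i * b j else 0) else 0)"

text \<open>tau n r v (sum a_i X^i) = sum a_i^r X^(v i mod n); used with r = q^u.\<close>
definition tau :: "nat \<Rightarrow> nat \<Rightarrow> int \<Rightarrow> (nat \<Rightarrow> 'a::comm_ring_1) \<Rightarrow> nat \<Rightarrow> 'a" where
  "tau n r v a = (\<lambda>k. if k < n then (\<Sum>i<n. if (v * int i) mod int n = int k then a i ^ r else 0) else 0)"

definition trace :: "nat \<Rightarrow> nat \<Rightarrow> 'a::comm_ring_1 \<Rightarrow> 'a" where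
  "trace q t x = (\<Sum>w<t. x ^ (q ^ w))"

definition phi :: "nat \<Rightarrow> nat \<Rightarrow> 'a::comm_ring_1 \<Rightarrow> 'a" where
  "phi q t x = (\<Sum>w\<in>{1..<t}. x ^ (q ^ w))"

definition herm_ok :: "nat \<Rightarrow> nat \<Rightarrow> 'a::field \<Rightarrow> bool" where
  "herm_ok q t \<gamma> \<longleftrightarrow> (let e = multiplicity (2::nat) t in
      \<gamma> \<noteq> 0 \<and> \<gamma> ^ (q ^ (2 ^ e)) = \<gamma> \<and> \<gamma> + \<gamma> ^ (q ^ (2 ^ (e - 1))) = 0)"

definition in_T :: "nat \<Rightarrow> nat \<Rightarrow> nat \<Rightarrow> 'a::field form_kind \<Rightarrow> bool" where
  "in_T p q t \<delta> = (case \<delta> of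
       Star \<Rightarrow> 2 \<le> t \<and> t mod p \<noteq> 1 mod p
     | Ord \<Rightarrow> 2 \<le> t
     | Herm \<gamma> \<Rightarrow> 2 \<le> t \<and> even t \<and> herm_ok q t \<gamma>)"

definition vform :: "nat \<Rightarrow> nat \<Rightarrow> nat \<Rightarrow> 'a::field form_kind \<Rightarrow> (nat \<Rightarrow> 'a) \<Rightarrow> (nat \<Rightarrow> 'a) \<Rightarrow> 'a" where
  "vform q t n \<delta> a b = (\<Sum>j<n. case \<delta> of
       Ord \<Rightarrow> trace q t (a j * b j)
     | Herm \<gamma> \<Rightarrow> trace q t (\<gamma> * a j * b j ^ (q ^ (t div 2)))
     | Star \<Rightarrow> trace q t (a j * phi q t (b j)))"

definition bform :: "nat \<Rightarrow> nat \<Rightarrow> nat \<Rightarrow> 'a::field form_kind \<Rightarrow> (nat \<Rightarrow> 'a) \<Rightarrow> (nat \<Rightarrow> 'a) \<Rightarrow> nat \<Rightarrow> 'a" where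
  "bform q t n \<delta> a b = (case \<delta> of
       Ord \<Rightarrow> (\<lambda>k. \<Sum>w<t. tau n (q ^ w) 1 (rmul n a (tau n 1 (-1) b)) k)
     | Herm \<gamma> \<Rightarrow> (\<lambda>k. \<Sum>w<t. tau n (q ^ w) 1 (rmul n (\<lambda>i. \<gamma> * a i) (tau n (q ^ (t div 2)) (-1) b)) k)
     | Star \<Rightarrow> (\<lambda>k. \<Sum>u<t. tau n (q ^ u) 1
                    (rmul n a (\<lambda>i. \<Sum>w\<in>{1..<t}. tau n (q ^ w) (-1) b i)) k))"

definition cshift :: "nat \<Rightarrow> (nat \<Rightarrow> 'a::zero) \<Rightarrow> nat \<Rightarrow> 'a" where
  "cshift n a = (\<lambda>k. if k < n then a ((k + n - 1) mod n) else 0)"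

definition lin_code :: "nat \<Rightarrow> nat \<Rightarrow> nat \<Rightarrow> (nat \<Rightarrow> 'a::field) set \<Rightarrow> bool" where
  "lin_code q t n C \<longleftrightarrow> C \<subseteq> vecs (Fsub (q ^ t)) n \<and> zvec \<in> C
     \<and> (\<forall>a\<in>C. \<forall>b\<in>C. (\<lambda>k. a k + b k) \<in> C)
     \<and> (\<forall>c\<in>Fsub q. \<forall>a\<in>C. (\<lambda>k. c * a k) \<in> C)"

definition cyclic_code :: "nat \<Rightarrow> nat \<Rightarrow> nat \<Rightarrow> (nat \<Rightarrow> 'a::field) set \<Rightarrow> bool" where
  "cyclic_code q t n C \<longleftrightarrow> lin_code q t n C \<and> (\<forall>a\<in>C. cshift n a \<in> C)"

definition dual :: "nat \<Rightarrow> nat \<Rightarrow> nat \<Rightarrow> 'a::field form_kind \<Rightarrow> (nat \<Rightarrow> 'a) set \<Rightarrow> (nat \<Rightarrow> 'a) set" where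
  "dual q t n \<delta> C = {v \<in> vecs (Fsub (q ^ t)) n. \<forall>c\<in>C. vform q t n \<delta> v c = 0}"

definition lcd :: "nat \<Rightarrow> nat \<Rightarrow> nat \<Rightarrow> 'a::field form_kind \<Rightarrow> (nat \<Rightarrow> 'a) set \<Rightarrow> bool" where
  "lcd q t n \<delta> C \<longleftrightarrow> C \<inter> dual q t n \<delta> C = {zvec}"

definition cyc_coset :: "nat \<Rightarrow> nat \<Rightarrow> int \<Rightarrow> nat set" where
  "cyc_coset q n l = {nat ((l * int q ^ j) mod int n) | j. True}"

definition fpoly :: "'a::field \<Rightarrow> nat \<Rightarrow> nat \<Rightarrow> int \<Rightarrow> 'a poly" where
  "fpoly \<eta> q n l = (\<Prod>k\<in>cyc_coset q n l. [:- (\<eta> ^ k), 1:])"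

definition gpoly :: "'a::field \<Rightarrow> nat \<Rightarrow> nat \<Rightarrow> int \<Rightarrow> 'a poly" where
  "gpoly \<eta> q n l = (monom 1 n - 1) div fpoly \<eta> q n l"

definition ideal_gen :: "'a::field set \<Rightarrow> nat \<Rightarrow> 'a poly \<Rightarrow> (nat \<Rightarrow> 'a) set" where
  "ideal_gen F n g = {rmul n b (\<lambda>k. coeff g k) | b. b \<in> vecs F n}"

definition Jid :: "nat \<Rightarrow> nat \<Rightarrow> nat \<Rightarrow> 'a::field \<Rightarrow> int \<Rightarrow> (nat \<Rightarrow> 'a) set" where
  "Jid q t n \<eta> l = ideal_gen (Fsub (q ^ t)) n (gpoly \<eta> q n l)"

definition Kid :: "nat \<Rightarrow> nat \<Rightarrow> 'a::field \<Rightarrow> int \<Rightarrow> (nat \<Rightarrow> 'a) set" where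
  "Kid q n \<eta> l = ideal_gen (Fsub q) n (gpoly \<eta> q n l)"

definition mu :: "nat \<Rightarrow> nat \<Rightarrow> nat \<Rightarrow> (nat \<Rightarrow> nat) \<Rightarrow> nat \<Rightarrow> nat" where
  "mu q n s ell i = (THE j. j < s \<and> cyc_coset q n (- int (ell i)) = cyc_coset q n (int (ell j)))"

definition Iset :: "nat \<Rightarrow> nat \<Rightarrow> nat \<Rightarrow> (nat \<Rightarrow> nat) \<Rightarrow> nat set" where
  "Iset q n s ell = (if odd n then {0}
      else {0, THE j. j < s \<and> cyc_coset q n (int (ell j)) = {n div 2}})"

definition Fset :: "nat \<Rightarrow> nat \<Rightarrow> nat \<Rightarrow> (nat \<Rightarrow> nat) \<Rightarrow> nat set" where
  "Fset q n s ell = {i. i < s \<and> mu q n s ell i = i} - Iset q n s ell"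

definition ksub :: "nat \<Rightarrow> (nat \<Rightarrow> 'a::field) set \<Rightarrow> (nat \<Rightarrow> 'a) set \<Rightarrow> (nat \<Rightarrow> 'a) set \<Rightarrow> bool" where
  "ksub n K J D \<longleftrightarrow> D \<subseteq> J \<and> zvec \<in> D
     \<and> (\<forall>a\<in>D. \<forall>b\<in>D. (\<lambda>k. a k + b k) \<in> D)
     \<and> (\<forall>x\<in>K. \<forall>a\<in>D. rmul n x a \<in> D)"

definition ldual :: "nat \<Rightarrow> nat \<Rightarrow> nat \<Rightarrow> 'a::field form_kind \<Rightarrow> (nat \<Rightarrow> 'a) set \<Rightarrow> (nat \<Rightarrow> 'a) set \<Rightarrow> (nat \<Rightarrow> 'a) set" where
  "ldual q t n \<delta> J D = {a \<in> J. \<forall>c\<in>D. bform q t n \<delta> a c = zvec}"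

definition Nfix :: "nat \<Rightarrow> nat \<Rightarrow> nat \<Rightarrow> 'a::field form_kind \<Rightarrow> 'a \<Rightarrow> int \<Rightarrow> nat" where
  "Nfix q t n \<delta> \<eta> l = card {D. ksub n (Kid q n \<eta> l) (Jid q t n \<eta> l) D
       \<and> D \<inter> ldual q t n \<delta> (Jid q t n \<eta> l) D = {zvec}}"

definition Npair :: "nat \<Rightarrow> nat \<Rightarrow> nat \<Rightarrow> 'a::field form_kind \<Rightarrow> 'a \<Rightarrow> int \<Rightarrow> int \<Rightarrow> nat" where
  "Npair q t n \<delta> \<eta> l l' = card {(D, E). ksub n (Kid q n \<eta> l) (Jid q t n \<eta> l) D
       \<and> ksub n (Kid q n \<eta> l') (Jid q t n \<eta> l') E
       \<and> D \<inter> ldual q t n \<delta> (Jid q t n \<eta> l) E = {zvec}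
       \<and> E \<inter> ldual q t n \<delta> (Jid q t n \<eta> l') D = {zvec}}"

end

theory Submission
  imports Defs "HOL-Number_Theory.Number_Theory" "HOL-Library.FuncSet"
begin

text \<open>
  The discrete Fourier transform with respect to \<open>\<eta>\<close> diagonalises \<open>R_n\<close>: multiplication
  becomes pointwise, the cyclic shift becomes multiplication by \<open>\<eta>^m\<close>, and \<open>J_i\<close> consists of
  the vectors whose transform is supported on the coset of \<open>\<ell>_i\<close>. The vector \<open>e_i\<close> whose
  transform is the indicator of that coset has coefficients in \<open>F_q\<close> (its transform commutes with
  the Frobenius); the \<open>e_i\<close> are orthogonal idempotents summing to \<open>1\<close>, and \<open>e_i\<close> projects onto
  \<open>J_i\<close>. A cyclic code is an \<open>R_n^(q)\<close>-submodule, hence the sum of its components \<open>C \<inter> J_i\<close>,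
  and conversely every family of \<open>K_i\<close>-subspaces of the \<open>J_i\<close> sums to a cyclic code.
  The form \<open>(a, c)_\<delta>\<close> is the trace of \<open>\<Sum>\<^sub>j a_j W(c_j)\<close> for an additive twist \<open>W\<close> commuting
  with multiplication by vectors over \<open>F_q\<close>, so Parseval's identity gives
  \<open>(e_i a, c)_\<delta> = (a, e_\<mu>\<^sub>i c)_\<delta>\<close>: the dual of \<open>C\<close> meets \<open>J_i\<close> in the local dual of
  \<open>C \<inter> J_\<mu>\<^sub>i\<close>. Hence \<open>C\<close> is complementary-dual iff all its components are, and counting the
  families of components along the fixed points and the 2-cycles of the involution \<open>\<mu>\<close> gives
  the product formula.
\<close>

section \<open>Counting families constrained along an involution\<close>

locale involution_transversal =
  fixes S :: "'i set" and \<mu> :: "'i \<Rightarrow> 'i" and M :: "'i set"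
  assumes finite_S: "finite S"
    and involution: "\<And>i. i \<in> S \<Longrightarrow> \<mu> i \<in> S \<and> \<mu> (\<mu> i) = i"
    and M_moved: "M \<subseteq> {i \<in> S. \<mu> i \<noteq> i}"
    and M_transversal: "\<And>i. i \<in> S \<Longrightarrow> \<mu> i \<noteq> i \<Longrightarrow> i \<in> M \<longleftrightarrow> \<mu> i \<notin> M"
begin

abbreviation fixed :: "'i set" where "fixed \<equiv> {i \<in> S. \<mu> i = i}"

lemma index_cases:
  assumes "i \<in> S"
  obtains "\<mu> i = i" "i \<notin> M" | "i \<in> M" "\<mu> i \<noteq> i" "\<mu> i \<notin> M" | "\<mu> i \<in> M" "\<mu> i \<noteq> i" "i \<notin> M"
  using assms involution M_moved M_transversal by blast

definition split_fun :: "('i \<Rightarrow> 'x) \<Rightarrow> ('i \<Rightarrow> 'x) \<times> ('i \<Rightarrow> 'x \<times> 'x)" where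
  "split_fun f = (restrict f fixed, restrict (\<lambda>h. (f h, f (\<mu> h))) M)"

definition join_fun :: "('i \<Rightarrow> 'x) \<times> ('i \<Rightarrow> 'x \<times> 'x) \<Rightarrow> 'i \<Rightarrow> 'x" where
  "join_fun y = restrict (\<lambda>i. if \<mu> i = i then fst y i
      else if i \<in> M then fst (snd y i) else snd (snd y (\<mu> i))) S"

lemma join_fun_at_M:
  assumes "h \<in> M"
  shows "join_fun y h = fst (snd y h)" and "join_fun y (\<mu> h) = snd (snd y h)"
proof -
  have "h \<in> S" "\<mu> h \<noteq> h" using assms M_moved by auto
  moreover from this have "\<mu> h \<in> S" "\<mu> (\<mu> h) = h" "\<mu> h \<notin> M"
    using involution[of h] M_transversal[of h] assms by blast+
  ultimately show "join_fun y h = fst (snd y h)" and "join_fun y (\<mu> h) = snd (snd y h)"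
    using assms unfolding join_fun_def by auto
qed

lemma join_split_fun:
  assumes "f \<in> extensional S"
  shows "join_fun (split_fun f) = f"
proof
  fix i
  show "join_fun (split_fun f) i = f i"
  proof (cases "i \<in> S")
    case True
    then show ?thesis
      by (cases rule: index_cases) (use True involution in \<open>auto simp: join_fun_def split_fun_def\<close>)
  next
    case False
    then show ?thesis using assms by (simp add: join_fun_def extensional_def)
  qed
qed

lemma split_join_fun:
  assumes "fst y \<in> extensional fixed" and "snd y \<in> extensional M"
  shows "split_fun (join_fun y) = y"
proof -
  have "restrict (join_fun y) fixed = fst y"
    using assms(1) by (auto simp: join_fun_def extensional_def)
  moreover have "restrict (\<lambda>h. (join_fun y h, join_fun y (\<mu> h))) M = snd y"
    using assms(2) by (auto simp: join_fun_at_M extensional_def)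
  ultimately show ?thesis by (simp add: split_fun_def)
qed

definition constrained :: "('i \<Rightarrow> 'x set) \<Rightarrow> ('i \<Rightarrow> 'x \<Rightarrow> 'x \<Rightarrow> bool) \<Rightarrow> ('i \<Rightarrow> 'x) set" where
  "constrained B P = {f \<in> PiE S B. \<forall>i\<in>S. P i (f i) (f (\<mu> i))}"

definition fixed_choices :: "('i \<Rightarrow> 'x set) \<Rightarrow> ('i \<Rightarrow> 'x \<Rightarrow> 'x \<Rightarrow> bool) \<Rightarrow> 'i \<Rightarrow> 'x set" where
  "fixed_choices B P i = {D \<in> B i. P i D D}"

definition pair_choices :: "('i \<Rightarrow> 'x set) \<Rightarrow> ('i \<Rightarrow> 'x \<Rightarrow> 'x \<Rightarrow> bool) \<Rightarrow> 'i \<Rightarrow> ('x \<times> 'x) set" where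
  "pair_choices B P h = {(D, E). D \<in> B h \<and> E \<in> B (\<mu> h) \<and> P h D E \<and> P (\<mu> h) E D}"

lemma split_fun_constrained:
  assumes "f \<in> constrained B P"
  shows "split_fun f \<in> PiE fixed (fixed_choices B P) \<times> PiE M (pair_choices B P)"
proof -
  have fB: "f i \<in> B i" and fP: "P i (f i) (f (\<mu> i))" if "i \<in> S" for i
    using assms that by (auto simp: constrained_def)
  show ?thesis
    unfolding split_fun_def mem_Times_iff fst_conv snd_conv restrict_PiE_iff
  proof (intro conjI ballI)
    fix i assume "i \<in> fixed"
    then show "f i \<in> fixed_choices B P i" using fB fP[of i] by (simp add: fixed_choices_def)
  next
    fix h assume "h \<in> M"
    then have "h \<in> S" "\<mu> h \<in> S" "\<mu> (\<mu> h) = h" using M_moved involution by auto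
    then show "(f h, f (\<mu> h)) \<in> pair_choices B P h"
      using fB fP[of h] fP[of "\<mu> h"] by (simp add: pair_choices_def)
  qed
qed

lemma join_fun_constrained:
  assumes u: "u \<in> PiE fixed (fixed_choices B P)" and v: "v \<in> PiE M (pair_choices B P)"
  shows "join_fun (u, v) \<in> constrained B P"
proof -
  have "join_fun (u, v) i \<in> B i \<and> P i (join_fun (u, v) i) (join_fun (u, v) (\<mu> i))"
    if i: "i \<in> S" for i
    using i
  proof (cases rule: index_cases)
    case 1
    then show ?thesis using u i by (auto simp: join_fun_def fixed_choices_def)
  next
    case 2
    then show ?thesis
      using PiE_mem[OF v 2(1)] join_fun_at_M[of i "(u, v)"] by (auto simp: pair_choices_def)
  next
    case 3
    then show ?thesis
      using PiE_mem[OF v 3(1)] join_fun_at_M[of "\<mu> i" "(u, v)"] involution[OF i]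
      by (auto simp: pair_choices_def)
  qed
  moreover have "join_fun (u, v) \<in> extensional S" by (simp add: join_fun_def)
  ultimately show ?thesis unfolding constrained_def PiE_def Pi_def by auto
qed

lemma bij_betw_split_fun:
  "bij_betw split_fun (constrained B P) (PiE fixed (fixed_choices B P) \<times> PiE M (pair_choices B P))"
proof (rule bij_betw_byWitness[where f' = join_fun])
  show "\<forall>f\<in>constrained B P. join_fun (split_fun f) = f"
    by (auto simp: constrained_def PiE_def join_split_fun)
  show "\<forall>y\<in>PiE fixed (fixed_choices B P) \<times> PiE M (pair_choices B P). split_fun (join_fun y) = y"
    by (auto simp: PiE_def split_join_fun)
  show "split_fun ` constrained B P \<subseteq> PiE fixed (fixed_choices B P) \<times> PiE M (pair_choices B P)"
    using split_fun_constrained by blast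
  show "join_fun ` (PiE fixed (fixed_choices B P) \<times> PiE M (pair_choices B P)) \<subseteq> constrained B P"
    using join_fun_constrained by auto
qed

theorem card_constrained_PiE:
  fixes B :: "'i \<Rightarrow> 'x set" and P :: "'i \<Rightarrow> 'x \<Rightarrow> 'x \<Rightarrow> bool"
  shows "card {f \<in> PiE S B. \<forall>i\<in>S. P i (f i) (f (\<mu> i))} =
     (\<Prod>i\<in>fixed. card {D \<in> B i. P i D D}) *
     (\<Prod>h\<in>M. card {(D, E). D \<in> B h \<and> E \<in> B (\<mu> h) \<and> P h D E \<and> P (\<mu> h) E D})"
proof -
  have "finite fixed" "finite M" using finite_S M_moved by (auto intro: finite_subset)
  then have "card (constrained B P) =
      (\<Prod>i\<in>fixed. card (fixed_choices B P i)) * (\<Prod>h\<in>M. card (pair_choices B P h))"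
    using bij_betw_same_card[OF bij_betw_split_fun] by (simp add: card_cartesian_product card_PiE)
  then show ?thesis by (simp add: constrained_def fixed_choices_def pair_choices_def)
qed

end

section \<open>The discrete Fourier transform\<close>

locale cyclotomic_setting =
  fixes p q ke n :: nat and \<eta> :: "'e::field"
  assumes prime_p: "prime p" and ke_ge_1: "ke \<ge> 1" and q_def: "q = p ^ ke"
    and char_p: "of_nat p = (0::'e)"
    and n_ge_1: "n \<ge> 1" and coprime_n_q: "coprime n q"
    and eta_n: "\<eta> ^ n = 1" and eta_prim: "\<forall>j. 0 < j \<and> j < n \<longrightarrow> \<eta> ^ j \<noteq> 1"
begin

lemma CHAR_eq_p: "CHAR('e) = p"
proof -
  have "CHAR('e) dvd p" using char_p by (simp add: of_nat_eq_0_iff_char_dvd)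
  then have "CHAR('e) = 1 \<or> CHAR('e) = p" using prime_p prime_nat_iff by blast
  moreover have "CHAR('e) \<noteq> 1" using of_nat_CHAR[where 'a='e] by auto
  ultimately show ?thesis by blast
qed

lemma q_power_eq: "q ^ w = p ^ (ke * w)" by (simp add: q_def power_mult)

lemma frobenius_sum: "(sum f A :: 'e) ^ (q ^ w) = sum (\<lambda>i. f i ^ (q ^ w)) A"
  using freshmans_dream_sum'[of "q ^ w" "ke * w" f A] CHAR_eq_p prime_p q_power_eq by auto

lemma frobenius_add: "((x::'e) + y) ^ (q ^ w) = x ^ (q ^ w) + y ^ (q ^ w)"
  using freshmans_dream'[of "q ^ w" "ke * w" x y] CHAR_eq_p prime_p q_power_eq by auto

lemma frobenius_diff: "((x::'e) - y) ^ (q ^ w) = x ^ (q ^ w) - y ^ (q ^ w)"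
  using frobenius_add[of "x - y" y w] by (simp add: algebra_simps)

lemma q_gt_0: "q > 0" using q_def prime_p prime_gt_0_nat by simp

lemma of_nat_n_neq_0: "(of_nat n :: 'e) \<noteq> 0"
proof
  assume "(of_nat n :: 'e) = 0"
  then have "p dvd n" using CHAR_eq_p of_nat_eq_0_iff_char_dvd by metis
  moreover have "p dvd q" using q_def ke_ge_1 by (simp add: dvd_power)
  ultimately have "p dvd gcd n q" by simp
  then show False using coprime_n_q prime_p by simp
qed

lemma eta_neq_0: "\<eta> \<noteq> 0" using eta_n n_ge_1 by (cases "\<eta> = 0") (auto simp: power_0_left)

definition in_Rn :: "(nat \<Rightarrow> 'e) \<Rightarrow> bool" where
  "in_Rn a \<longleftrightarrow> (\<forall>j\<ge>n. a j = 0)"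

definition dft :: "(nat \<Rightarrow> 'e) \<Rightarrow> nat \<Rightarrow> 'e" where
  "dft a m = (\<Sum>j<n. a j * \<eta> ^ (j * m))"

definition idft :: "(nat \<Rightarrow> 'e) \<Rightarrow> nat \<Rightarrow> 'e" where
  "idft f j = (if j < n then inverse (of_nat n) * (\<Sum>m<n. f m * inverse \<eta> ^ (j * m)) else 0)"

lemma eta_pow_mod: "\<eta> ^ m = \<eta> ^ (m mod n)"
proof -
  have "\<eta> ^ m = \<eta> ^ (n * (m div n)) * \<eta> ^ (m mod n)" by (simp flip: power_add)
  also have "\<eta> ^ (n * (m div n)) = 1" by (simp add: power_mult eta_n)
  finally show ?thesis by simp
qed

lemma inverse_eta_power_n: "inverse \<eta> ^ n = 1" by (simp add: power_inverse eta_n)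

lemma inverse_eta_pow_mod: "inverse \<eta> ^ m = inverse \<eta> ^ (m mod n)"
  by (metis eta_pow_mod power_inverse)

lemma eta_pow_eq_imp_eq: "a < n \<Longrightarrow> b < n \<Longrightarrow> \<eta> ^ a = \<eta> ^ b \<Longrightarrow> a \<le> b \<Longrightarrow> a = b"
proof (rule ccontr)
  assume ab: "a < n" "b < n" "\<eta> ^ a = \<eta> ^ b" "a \<le> b" "a \<noteq> b"
  have "\<eta> ^ b = \<eta> ^ a * \<eta> ^ (b - a)" using ab(4) by (metis le_add_diff_inverse power_add)
  then have "\<eta> ^ (b - a) = 1" using ab eta_neq_0 by simp
  moreover have "0 < b - a" "b - a < n" using ab by auto
  ultimately show False using eta_prim by blast
qed

lemma eta_pow_eq_iff: "\<eta> ^ a = \<eta> ^ b \<longleftrightarrow> a mod n = b mod n"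
proof
  assume "\<eta> ^ a = \<eta> ^ b"
  then have e: "\<eta> ^ (a mod n) = \<eta> ^ (b mod n)" by (metis eta_pow_mod)
  have "a mod n < n" "b mod n < n" using n_ge_1 by auto
  then show "a mod n = b mod n" using eta_pow_eq_imp_eq[OF _ _ e] eta_pow_eq_imp_eq[OF _ _ e[symmetric]]
    by (metis nle_le)
next
  assume "a mod n = b mod n" then show "\<eta> ^ a = \<eta> ^ b" by (metis eta_pow_mod)
qed

lemma eta_pow_inj: "a < n \<Longrightarrow> b < n \<Longrightarrow> \<eta> ^ a = \<eta> ^ b \<Longrightarrow> a = b"
  using eta_pow_eq_iff by simp

lemma sum_roots_of_unity: "(\<Sum>j<n. (\<eta> ^ a * inverse \<eta> ^ b) ^ j) = (if a mod n = b mod n then of_nat n else 0)"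
proof -
  let ?z = "\<eta> ^ a * inverse \<eta> ^ b"
  have zq: "?z = \<eta> ^ a / \<eta> ^ b" by (simp add: power_inverse divide_inverse)
  have nz: "\<eta> ^ b \<noteq> 0" using eta_neq_0 by simp
  show ?thesis
  proof (cases "a mod n = b mod n")
    case True
    then have "\<eta> ^ a = \<eta> ^ b" using eta_pow_eq_iff by blast
    then have "?z = 1" using zq nz by simp
    then show ?thesis using True by simp
  next
    case False
    have "\<eta> ^ a \<noteq> \<eta> ^ b" using False eta_pow_eq_iff by blast
    then have z1: "?z \<noteq> 1" using zq nz by simp
    have e1: "(\<eta> ^ a) ^ n = (\<eta> ^ n) ^ a" by (metis power_mult mult.commute)
    have e2: "(inverse \<eta> ^ b) ^ n = (inverse \<eta> ^ n) ^ b" by (metis power_mult mult.commute)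
    have "?z ^ n = (\<eta> ^ a) ^ n * (inverse \<eta> ^ b) ^ n" by (rule power_mult_distrib)
    then have "?z ^ n = 1" by (simp only: e1 e2 eta_n inverse_eta_power_n power_one mult_1)
    then show ?thesis using False geometric_sum[OF z1, of n] by simp
  qed
qed

lemma sum_mult_indicator_mod:
  assumes "j < n"
  shows "(\<Sum>i<n. a i * (if i mod n = j mod n then c else 0)) = a j * (c::'e)"
proof -
  have "(\<Sum>i<n. a i * (if i mod n = j mod n then c else 0)) = (\<Sum>i<n. if i = j then a i * c else 0)"
    by (rule sum.cong) (use assms in auto)
  also have "\<dots> = a j * c" using assms by simp
  finally show ?thesis .
qed

lemma dft_inversion:
  assumes "in_Rn a" "j < n"
  shows "a j = inverse (of_nat n) * (\<Sum>m<n. dft a m * inverse \<eta> ^ (j * m))"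
proof -
  have "(\<Sum>m<n. dft a m * inverse \<eta> ^ (j * m)) = (\<Sum>m<n. \<Sum>i<n. a i * (\<eta> ^ i * inverse \<eta> ^ j) ^ m)"
    unfolding dft_def sum_distrib_right
  proof (rule sum.cong[OF refl], rule sum.cong[OF refl])
    fix m i
    have "\<eta> ^ (i * m) = (\<eta> ^ i) ^ m" "inverse \<eta> ^ (j * m) = (inverse \<eta> ^ j) ^ m"
      by (simp_all add: power_mult)
    then show "a i * \<eta> ^ (i * m) * inverse \<eta> ^ (j * m) = a i * (\<eta> ^ i * inverse \<eta> ^ j) ^ m"
      by (simp add: power_mult_distrib mult.assoc)
  qed
  also have "\<dots> = (\<Sum>i<n. a i * (\<Sum>m<n. (\<eta> ^ i * inverse \<eta> ^ j) ^ m))"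
    by (subst sum.swap) (simp add: sum_distrib_left)
  also have "\<dots> = (\<Sum>i<n. a i * (if i mod n = j mod n then of_nat n else 0))"
    by (simp only: sum_roots_of_unity)
  also have "\<dots> = a j * of_nat n" using sum_mult_indicator_mod assms by blast
  finally show ?thesis using of_nat_n_neq_0 by simp
qed

lemma dft_injective:
  assumes "in_Rn a" "in_Rn b" "\<And>m. m < n \<Longrightarrow> dft a m = dft b m"
  shows "a = b"
proof
  fix j show "a j = b j"
  proof (cases "j < n")
    case True then show ?thesis using dft_inversion[OF assms(1) True] dft_inversion[OF assms(2) True] assms(3) by simp
  next
    case False then show ?thesis using assms unfolding in_Rn_def by simp
  qed
qed

lemma in_Rn_idft: "in_Rn (idft f)" unfolding in_Rn_def idft_def by simp

lemma dft_idft: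
  assumes "m < n"
  shows "dft (idft f) m = f m"
proof -
  have step: "idft f j * \<eta> ^ (j * m) = inverse (of_nat n) * (\<Sum>i<n. f i * (\<eta> ^ m * inverse \<eta> ^ i) ^ j)"
    if jn: "j < n" for j
  proof -
    have "(\<Sum>i<n. f i * inverse \<eta> ^ (j * i)) * \<eta> ^ (j * m) = (\<Sum>i<n. f i * (\<eta> ^ m * inverse \<eta> ^ i) ^ j)"
      unfolding sum_distrib_right
    proof (rule sum.cong[OF refl])
      fix i
      have "\<eta> ^ (j * m) = (\<eta> ^ m) ^ j" "inverse \<eta> ^ (j * i) = (inverse \<eta> ^ i) ^ j"
        by (metis power_mult mult.commute)+
      then show "f i * inverse \<eta> ^ (j * i) * \<eta> ^ (j * m) = f i * (\<eta> ^ m * inverse \<eta> ^ i) ^ j"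
        by (simp add: power_mult_distrib mult_ac)
    qed
    then show ?thesis using jn unfolding idft_def by (simp add: mult.assoc)
  qed
  have "dft (idft f) m = (\<Sum>j<n. inverse (of_nat n) * (\<Sum>i<n. f i * (\<eta> ^ m * inverse \<eta> ^ i) ^ j))"
    unfolding dft_def by (rule sum.cong) (auto simp: step)
  also have "\<dots> = inverse (of_nat n) * (\<Sum>j<n. \<Sum>i<n. f i * (\<eta> ^ m * inverse \<eta> ^ i) ^ j)"
    by (rule sum_distrib_left[symmetric])
  also have "\<dots> = inverse (of_nat n) * (\<Sum>i<n. f i * (\<Sum>j<n. (\<eta> ^ m * inverse \<eta> ^ i) ^ j))"
    by (subst sum.swap) (simp add: sum_distrib_left)
  also have "\<dots> = inverse (of_nat n) * (\<Sum>i<n. f i * (if i mod n = m mod n then of_nat n else 0))"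
    by (simp only: sum_roots_of_unity) (simp add: eq_commute)
  also have "\<dots> = f m" using sum_mult_indicator_mod[OF assms, of f] of_nat_n_neq_0 by simp
  finally show ?thesis .
qed

lemma in_Rn_rmul: "in_Rn (rmul n a b)" unfolding in_Rn_def rmul_def by simp

lemma eta_pow_mod_mult: "\<eta> ^ ((u mod n) * m) = \<eta> ^ (u * m)"
  by (subst eta_pow_mod, subst (2) eta_pow_mod) (simp add: mod_mult_left_eq)

lemma dft_rmul: "dft (rmul n a b) m = dft a m * dft b m"
proof -
  have "dft (rmul n a b) m = (\<Sum>i<n. \<Sum>u<n. \<Sum>v<n. (if (u + v) mod n = i then a u * b v * \<eta> ^ (i * m) else 0))"
  proof -
    have ifm: "(if P then x else 0) * y = (if P then x * y else 0)" for P and x y :: 'e by simp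
    show ?thesis unfolding dft_def rmul_def by (auto intro!: sum.cong simp: sum_distrib_right ifm)
  qed
  also have "\<dots> = (\<Sum>u<n. \<Sum>v<n. \<Sum>i<n. (if (u + v) mod n = i then a u * b v * \<eta> ^ (i * m) else 0))"
    by (subst sum.swap, rule sum.cong[OF refl], rule sum.swap)
  also have "\<dots> = (\<Sum>u<n. \<Sum>v<n. a u * b v * \<eta> ^ (((u + v) mod n) * m))"
  proof -
    have "(u + v) mod n < n" for u v using n_ge_1 by simp
    then show ?thesis by (simp add: sum.delta')
  qed
  also have "\<dots> = (\<Sum>u<n. \<Sum>v<n. (a u * \<eta> ^ (u * m)) * (b v * \<eta> ^ (v * m)))"
  proof -
    have "\<eta> ^ (((u + v) mod n) * m) = \<eta> ^ (u * m) * \<eta> ^ (v * m)" for u v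
      by (simp only: eta_pow_mod_mult add_mult_distrib power_add)
    then show ?thesis by (simp add: mult_ac)
  qed
  also have "\<dots> = dft a m * dft b m" unfolding dft_def by (simp add: sum_product)
  finally show ?thesis .
qed

lemma in_Rn_add: "in_Rn a \<Longrightarrow> in_Rn b \<Longrightarrow> in_Rn (\<lambda>k. a k + b k)" unfolding in_Rn_def by simp

lemma dft_add: "dft (\<lambda>k. a k + b k) m = dft a m + dft b m" unfolding dft_def by (simp add: distrib_right sum.distrib)

lemma in_Rn_scale: "in_Rn a \<Longrightarrow> in_Rn (\<lambda>k. c * a k)" unfolding in_Rn_def by simp

lemma dft_scale: "dft (\<lambda>k. c * a k) m = c * dft a m" unfolding dft_def by (simp add: sum_distrib_left mult_ac)

lemma in_Rn_sum: "(\<And>i. i \<in> A \<Longrightarrow> in_Rn (f i)) \<Longrightarrow> in_Rn (\<lambda>k. \<Sum>i\<in>A. f i k)" unfolding in_Rn_def by simp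

lemma dft_sum: "dft (\<lambda>k. \<Sum>i\<in>A. f i k) m = (\<Sum>i\<in>A. dft (f i) m)"
  unfolding dft_def sum_distrib_right by (rule sum.swap)

lemma in_Rn_zvec: "in_Rn zvec" unfolding in_Rn_def zvec_def by simp

lemma dft_zvec: "dft zvec m = 0" unfolding dft_def zvec_def by simp

lemma rmul_commute: "rmul n (a::nat\<Rightarrow>'e) b = rmul n b a"
  by (rule dft_injective) (auto simp: in_Rn_rmul dft_rmul mult.commute)

lemma rmul_assoc: "rmul n (rmul n (a::nat\<Rightarrow>'e) b) c = rmul n a (rmul n b c)"
  by (rule dft_injective) (auto simp: in_Rn_rmul dft_rmul mult.assoc)

lemma rmul_left_commute: "rmul n a (rmul n b c) = rmul n b (rmul n a (c :: nat \<Rightarrow> 'e))"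
  by (simp only: rmul_assoc[symmetric] rmul_commute[of a b])

lemma rmul_add_right: "rmul n (a::nat\<Rightarrow>'e) (\<lambda>k. b k + c k) = (\<lambda>k. rmul n a b k + rmul n a c k)"
  by (rule dft_injective) (auto simp: in_Rn_rmul in_Rn_add dft_rmul dft_add distrib_left)

lemma rmul_zvec_right: "rmul n (a::nat\<Rightarrow>'e) zvec = zvec"
  by (rule dft_injective) (auto simp: in_Rn_rmul in_Rn_zvec dft_rmul dft_zvec)

lemma rmul_zvec_left: "rmul n zvec a = (zvec :: nat \<Rightarrow> 'e)"
  by (simp add: rmul_commute[of zvec] rmul_zvec_right)

lemma rmul_scale_right: "rmul n (a::nat\<Rightarrow>'e) (\<lambda>k. c * b k) = (\<lambda>k. c * rmul n a b k)"
  by (rule dft_injective) (auto simp: in_Rn_rmul in_Rn_scale dft_rmul dft_scale mult_ac)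

lemma rmul_sum_right: "finite A \<Longrightarrow> rmul n (a::nat\<Rightarrow>'e) (\<lambda>k. \<Sum>i\<in>A. f i k) = (\<lambda>k. \<Sum>i\<in>A. rmul n a (f i) k)"
  by (rule dft_injective) (auto simp: in_Rn_rmul in_Rn_sum dft_rmul dft_sum sum_distrib_left)

definition unit_vec :: "nat \<Rightarrow> 'e" where "unit_vec = (\<lambda>k. if k = 0 then 1 else 0)"

lemma in_Rn_unit_vec: "in_Rn unit_vec" unfolding in_Rn_def unit_vec_def using n_ge_1 by simp

lemma dft_unit_vec: "dft unit_vec m = 1"
proof -
  have "dft unit_vec m = (\<Sum>j<n. if j = 0 then 1 else 0)" unfolding dft_def unit_vec_def by (rule sum.cong) auto
  then show ?thesis using n_ge_1 by simp
qed

lemma rmul_unit_vec: "in_Rn a \<Longrightarrow> rmul n unit_vec a = a"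
  by (rule dft_injective) (auto simp: in_Rn_rmul dft_rmul dft_unit_vec)

lemma cshift_index_left: "i < n \<Longrightarrow> (((i + n - 1) mod n) + 1) mod n = i"
proof -
  assume i: "i < n"
  have "(((i + n - 1) mod n) + 1) mod n = (i + n - 1 + 1) mod n" by (simp only: mod_add_left_eq)
  also have "\<dots> = i" using n_ge_1 i by simp
  finally show ?thesis .
qed

lemma cshift_index_right: "j < n \<Longrightarrow> ((j + 1) mod n + n - 1) mod n = j"
proof -
  assume j: "j < n"
  have "((j + 1) mod n + n - 1) mod n = ((j + 1) mod n + (n - 1)) mod n" using n_ge_1 by simp
  also have "\<dots> = (j + 1 + (n - 1)) mod n" by (simp only: mod_add_left_eq)
  also have "\<dots> = j" using n_ge_1 j by simp
  finally show ?thesis .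
qed

lemma dft_cshift: assumes "in_Rn a" shows "dft (cshift n a) m = \<eta> ^ m * dft a m"
proof -
  have "dft (cshift n a) m = (\<Sum>i<n. a ((i + n - 1) mod n) * \<eta> ^ (i * m))"
    unfolding dft_def cshift_def by simp
  also have "\<dots> = (\<Sum>j<n. a j * \<eta> ^ (((j + 1) mod n) * m))"
    by (rule sum.reindex_bij_witness[of _ "\<lambda>j. (j + 1) mod n" "\<lambda>i. (i + n - 1) mod n"])
      (use n_ge_1 in \<open>auto simp: cshift_index_left[simplified] cshift_index_right[simplified]\<close>)
  also have "\<dots> = (\<Sum>j<n. \<eta> ^ m * (a j * \<eta> ^ (j * m)))"
  proof -
    have "\<eta> ^ (((j + 1) mod n) * m) = \<eta> ^ m * \<eta> ^ (j * m)" for j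
      by (simp only: eta_pow_mod_mult add_mult_distrib power_add) simp
    then show ?thesis by (simp add: mult_ac)
  qed
  also have "\<dots> = \<eta> ^ m * dft a m" unfolding dft_def by (simp add: sum_distrib_left)
  finally show ?thesis .
qed

lemma in_Rn_cshift: "in_Rn (cshift n a)" unfolding in_Rn_def cshift_def by simp

lemma cshift_eq_rmul: "in_Rn a \<Longrightarrow> cshift n a = rmul n (cshift n unit_vec) a"
  by (rule dft_injective) (auto simp: in_Rn_cshift in_Rn_rmul dft_cshift dft_rmul in_Rn_unit_vec dft_unit_vec)

lemma dft_cshift_iter: "in_Rn a \<Longrightarrow> dft ((cshift n ^^ j) a) m = \<eta> ^ (j * m) * dft a m \<and> in_Rn ((cshift n ^^ j) a)"
proof (induction j)
  case 0 then show ?case by simp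
next
  case (Suc j)
  then show ?case by (simp add: dft_cshift in_Rn_cshift power_add mult.assoc)
qed

lemma rmul_eq_sum_cshift_iter:
  assumes "in_Rn a"
  shows "rmul n x a = (\<lambda>k. \<Sum>j<n. x j * (cshift n ^^ j) a k)"
proof (rule dft_injective)
  show "in_Rn (rmul n x a)" by (rule in_Rn_rmul)
  show "in_Rn (\<lambda>k. \<Sum>j<n. x j * (cshift n ^^ j) a k)"
    by (rule in_Rn_sum, rule in_Rn_scale) (use assms dft_cshift_iter in blast)
  fix m assume "m < n"
  have "dft (\<lambda>k. \<Sum>j<n. x j * (cshift n ^^ j) a k) m = (\<Sum>j<n. x j * dft ((cshift n ^^ j) a) m)"
    by (simp add: dft_sum dft_scale)
  also have "\<dots> = (\<Sum>j<n. x j * \<eta> ^ (j * m)) * dft a m"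
    using dft_cshift_iter[OF assms] by (simp add: sum_distrib_right mult.assoc)
  also have "\<dots> = dft (rmul n x a) m" using dft_rmul[of x a m] unfolding dft_def by simp
  finally show "dft (rmul n x a) m = dft (\<lambda>k. \<Sum>j<n. x j * (cshift n ^^ j) a k) m" by simp
qed

section \<open>Subfields and vectors over them\<close>

lemma Fsub_add: "x \<in> Fsub (q ^ w) \<Longrightarrow> y \<in> Fsub (q ^ w) \<Longrightarrow> (x + y :: 'e) \<in> Fsub (q ^ w)"
  unfolding Fsub_def by (simp add: frobenius_add)

lemma Fsub_mult: "x \<in> Fsub r \<Longrightarrow> y \<in> Fsub r \<Longrightarrow> (x * y :: 'e) \<in> Fsub r"
  unfolding Fsub_def by (simp add: power_mult_distrib)

lemma Fsub_0: "(0::'e) \<in> Fsub (q ^ w)" unfolding Fsub_def using q_gt_0 by simp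

lemma Fsub_1: "(1::'e) \<in> Fsub r" unfolding Fsub_def by simp

lemma Fsub_inverse: "x \<in> Fsub r \<Longrightarrow> inverse (x::'e) \<in> Fsub r"
  unfolding Fsub_def by (simp add: power_inverse)

lemma Fsub_sum: "(\<And>i. i \<in> A \<Longrightarrow> f i \<in> Fsub (q ^ w)) \<Longrightarrow> (\<Sum>i\<in>A. f i :: 'e) \<in> Fsub (q ^ w)"
  unfolding Fsub_def by (simp add: frobenius_sum)

lemma Fsub_q_power_q_pow: "(x::'e) \<in> Fsub q \<Longrightarrow> x ^ (q ^ w) = x"
proof (induction w)
  case (Suc w)
  have "x ^ (q ^ Suc w) = (x ^ q) ^ (q ^ w)" by (simp add: power_mult)
  then show ?case using Suc unfolding Fsub_def by simp
qed simp

lemma Fsub_q_into_power: "(x::'e) \<in> Fsub q \<Longrightarrow> x \<in> Fsub (q ^ w)"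
  using Fsub_q_power_q_pow unfolding Fsub_def by simp

lemma Fsub_of_nat: "(of_nat m :: 'e) \<in> Fsub q"
proof (induction m)
  case 0 then show ?case using Fsub_0[of 1] by simp
next
  case (Suc m) then show ?case using Fsub_add[where x="of_nat m" and y=1 and w=1] Fsub_1 by (simp add: add.commute)
qed

lemma vecs_in_Rn: "a \<in> vecs F n \<Longrightarrow> in_Rn a" unfolding vecs_def in_Rn_def by simp

lemma rmul_in_vecs:
  fixes a b :: "nat \<Rightarrow> 'e"
  assumes "a \<in> vecs (Fsub (q ^ w)) n" "b \<in> vecs (Fsub (q ^ w)) n"
  shows "rmul n a b \<in> vecs (Fsub (q ^ w)) n"
  using assms unfolding vecs_def rmul_def
  by (auto intro!: Fsub_sum Fsub_mult simp: Fsub_0)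

lemma vecs_Fq_into_power: "(a :: nat \<Rightarrow> 'e) \<in> vecs (Fsub q) n \<Longrightarrow> a \<in> vecs (Fsub (q ^ w)) n"
  unfolding vecs_def by (auto intro: Fsub_q_into_power)

lemma add_in_vecs: "(a :: nat \<Rightarrow> 'e) \<in> vecs (Fsub (q ^ w)) n \<Longrightarrow> b \<in> vecs (Fsub (q ^ w)) n \<Longrightarrow> (\<lambda>k. a k + b k) \<in> vecs (Fsub (q ^ w)) n"
  unfolding vecs_def by (auto intro: Fsub_add)

lemma zvec_in_vecs: "(zvec :: nat \<Rightarrow> 'e) \<in> vecs (Fsub (q ^ w)) n" unfolding vecs_def zvec_def using Fsub_0 by auto

lemma unit_vec_in_vecs_Fq: "unit_vec \<in> vecs (Fsub q) n"
  unfolding vecs_def unit_vec_def using Fsub_1 Fsub_0[of 1] n_ge_1 by auto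

lemma cshift_in_vecs: "a \<in> vecs (Fsub (q ^ w)) n \<Longrightarrow> cshift n a \<in> vecs (Fsub (q ^ w)) n"
  unfolding vecs_def cshift_def using n_ge_1 by auto

lemma power_if_zero: "(if P then x else 0 :: 'e) ^ (q ^ w) = (if P then x ^ (q ^ w) else 0)"
  using q_gt_0 by simp

lemma rmul_frobenius:
  fixes e c :: "nat \<Rightarrow> 'e"
  assumes "e \<in> vecs (Fsub q) n"
  shows "(rmul n e c j) ^ (q ^ w) = rmul n e (\<lambda>i. c i ^ (q ^ w)) j"
proof (cases "j < n")
  case True
  have "(rmul n e c j) ^ (q ^ w) = (\<Sum>u<n. \<Sum>v<n. (if (u + v) mod n = j then e u * c v else 0) ^ (q ^ w))"
    using True unfolding rmul_def by (simp add: frobenius_sum)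
  also have "\<dots> = (\<Sum>u<n. \<Sum>v<n. (if (u + v) mod n = j then e u * c v ^ (q ^ w) else 0))"
  proof (intro sum.cong refl)
    fix u v assume "u \<in> {..<n}"
    then have "e u ^ (q ^ w) = e u" using assms Fsub_q_power_q_pow unfolding vecs_def by simp
    then show "(if (u + v) mod n = j then e u * c v else 0) ^ (q ^ w) = (if (u + v) mod n = j then e u * c v ^ (q ^ w) else 0)"
      by (simp only: power_if_zero power_mult_distrib)
  qed
  also have "\<dots> = rmul n e (\<lambda>i. c i ^ (q ^ w)) j" using True unfolding rmul_def by simp
  finally show ?thesis .
next
  case False then show ?thesis unfolding rmul_def using q_gt_0 by simp
qed

lemma bij_betw_times_q_mod: "bij_betw (\<lambda>m. (m * q) mod n) {..<n} {..<n}"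
proof -
  have inj: "inj_on (\<lambda>m. (m * q) mod n) {..<n}"
  proof (rule inj_onI)
    fix a b assume ab: "a \<in> {..<n}" "b \<in> {..<n}" "(a * q) mod n = (b * q) mod n"
    then have "[a * q = b * q] (mod n)" by (simp add: cong_def)
    then have "[a = b] (mod n)" using cong_mult_rcancel_nat coprime_n_q by (metis coprime_commute)
    then show "a = b" using ab by (simp add: cong_def)
  qed
  have sub: "(\<lambda>m. (m * q) mod n) ` {..<n} \<subseteq> {..<n}" using n_ge_1 by auto
  have "(\<lambda>m. (m * q) mod n) ` {..<n} = {..<n}" using endo_inj_surj[OF _ sub inj] by simp
  then show ?thesis using inj unfolding bij_betw_def by simp
qed

lemma idft_in_vecs_Fq:
  assumes f: "\<And>m. m < n \<Longrightarrow> f ((m * q) mod n) = f m ^ q"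
  shows "idft f \<in> vecs (Fsub q) n"
  unfolding vecs_def
proof (intro CollectI conjI allI impI)
  fix j :: nat assume j: "j < n"
  let ?g = "\<lambda>m. f m * inverse \<eta> ^ (j * m)"
  have nq: "inverse (of_nat n :: 'e) ^ q = inverse (of_nat n)"
    using Fsub_inverse[OF Fsub_of_nat[of n]] unfolding Fsub_def by simp
  have "(\<Sum>m<n. ?g m) ^ q = (\<Sum>m<n. ?g m ^ q)" using frobenius_sum[of ?g "{..<n}" 1] by simp
  also have "\<dots> = (\<Sum>m<n. ?g ((m * q) mod n))"
  proof (rule sum.cong[OF refl])
    fix m assume m: "m \<in> {..<n}"
    have "(inverse \<eta> ^ (j * m)) ^ q = inverse \<eta> ^ (j * ((m * q) mod n))"
      by (simp add: power_mult[symmetric] mult.assoc) (metis inverse_eta_pow_mod mod_mult_right_eq)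
    then show "?g m ^ q = ?g ((m * q) mod n)" using f m by (simp add: power_mult_distrib)
  qed
  also have "\<dots> = (\<Sum>m<n. ?g m)" by (rule sum.reindex_bij_betw[OF bij_betw_times_q_mod])
  finally have "(\<Sum>m<n. ?g m) ^ q = (\<Sum>m<n. ?g m)" .
  then show "idft f j \<in> Fsub q" unfolding idft_def Fsub_def using j by (simp add: power_mult_distrib nq)
qed (simp add: idft_def)

section \<open>Cyclotomic cosets\<close>

abbreviation coset where "coset l \<equiv> cyc_coset q n l"

lemma mem_coset_iff: "k \<in> coset l \<longleftrightarrow> k < n \<and> (\<exists>j. [int k = l * int q ^ j] (mod int n))"
proof
  assume "k \<in> coset l"
  then obtain j where j: "k = nat ((l * int q ^ j) mod int n)" unfolding cyc_coset_def by auto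
  have "int k = (l * int q ^ j) mod int n" using j n_ge_1 by simp
  then show "k < n \<and> (\<exists>j. [int k = l * int q ^ j] (mod int n))" using n_ge_1
    by (metis cong_def mod_mod_trivial of_nat_less_iff pos_mod_bound of_nat_0_less_iff less_le_trans zero_less_one)
next
  assume "k < n \<and> (\<exists>j. [int k = l * int q ^ j] (mod int n))"
  then obtain j where k: "k < n" "[int k = l * int q ^ j] (mod int n)" by auto
  then have "int k = (l * int q ^ j) mod int n" unfolding cong_def by simp
  then have "k = nat ((l * int q ^ j) mod int n)" by simp
  then show "k \<in> coset l" unfolding cyc_coset_def by auto
qed

lemma coset_less_n: "k \<in> coset l \<Longrightarrow> k < n" using mem_coset_iff by blast

lemma coset_subset: "coset l \<subseteq> {..<n}" using coset_less_n by auto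

lemma finite_coset: "finite (coset l)" using coset_subset finite_subset by blast

lemma mod_mem_coset: "nat (l mod int n) \<in> coset l"
  unfolding cyc_coset_def by (auto intro: exI[of _ 0])

lemma coset_nonempty: "coset l \<noteq> {}" using mod_mem_coset by blast

lemma q_power_totient_cong: "[int q ^ (totient n * j) = 1] (mod int n)"
proof -
  have "[q ^ totient n = 1] (mod n)" using euler_theorem coprime_n_q by (simp add: coprime_commute)
  then have "[int q ^ totient n = 1] (mod int n)" by (metis cong_int_iff of_nat_1 of_nat_power)
  then have "[(int q ^ totient n) ^ j = 1 ^ j] (mod int n)" by (rule cong_pow)
  then show ?thesis by (simp add: power_mult)
qed

lemma coset_cong: "[l = l'] (mod int n) \<Longrightarrow> coset l = coset l'"
proof -
  assume c: "[l = l'] (mod int n)"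
  have "[l * int q ^ j = l' * int q ^ j] (mod int n)" for j using c by (rule cong_scalar_right)
  then show ?thesis unfolding set_eq_iff mem_coset_iff by (meson cong_trans cong_sym)
qed

lemma mem_coset_trans: "m \<in> coset l \<Longrightarrow> k \<in> coset (int m) \<Longrightarrow> k \<in> coset l"
proof -
  assume "m \<in> coset l" "k \<in> coset (int m)"
  then obtain i j where "[int m = l * int q ^ i] (mod int n)" "[int k = int m * int q ^ j] (mod int n)" "k < n"
    by (auto simp: mem_coset_iff)
  then have "[int k = l * int q ^ i * int q ^ j] (mod int n)"
    using cong_scalar_right cong_trans by blast
  then have "[int k = l * int q ^ (i + j)] (mod int n)" by (simp add: power_add mult.assoc)
  then show "k \<in> coset l" using \<open>k < n\<close> by (auto simp: mem_coset_iff)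
qed

lemma mem_coset_sym: "m \<in> coset l \<Longrightarrow> nat (l mod int n) \<in> coset (int m)"
proof -
  assume "m \<in> coset l"
  then obtain j where j: "[int m = l * int q ^ j] (mod int n)" by (auto simp: mem_coset_iff)
  have T: "totient n \<ge> 1" using n_ge_1 by (simp add: Suc_le_eq)
  have "[int m * int q ^ ((totient n - 1) * j) = l * int q ^ j * int q ^ ((totient n - 1) * j)] (mod int n)"
    using j by (rule cong_scalar_right)
  also have "l * int q ^ j * int q ^ ((totient n - 1) * j) = l * int q ^ (totient n * j)"
  proof -
    have "j + (totient n - 1) * j = totient n * j" using T by (simp add: algebra_simps)
    then show ?thesis by (metis mult.assoc power_add)
  qed
  also have "[l * int q ^ (totient n * j) = l * 1] (mod int n)" using q_power_totient_cong by (rule cong_scalar_left)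
  finally have "[int (nat (l mod int n)) = int m * int q ^ ((totient n - 1) * j)] (mod int n)"
    using n_ge_1 by (simp add: cong_def cong_sym_eq)
  moreover have "nat (l mod int n) < n" using n_ge_1 by (simp add: nat_less_iff)
  ultimately show ?thesis unfolding mem_coset_iff by auto
qed

lemma coset_eq_of_mem: "m \<in> coset l \<Longrightarrow> coset (int m) = coset l"
proof
  assume m: "m \<in> coset l"
  show "coset (int m) \<subseteq> coset l" using mem_coset_trans[OF m] by auto
  have "coset l = coset (int (nat (l mod int n)))" by (rule coset_cong) (use n_ge_1 in \<open>simp add: cong_def\<close>)
  then show "coset l \<subseteq> coset (int m)" using mem_coset_trans[OF mem_coset_sym[OF m]] by auto
qed

lemma times_q_mod_mem_coset: "k \<in> coset l \<Longrightarrow> (k * q) mod n \<in> coset l"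
proof -
  assume "k \<in> coset l"
  then obtain j where j: "[int k = l * int q ^ j] (mod int n)" by (auto simp: mem_coset_iff)
  have "[int ((k * q) mod n) = int k * int q] (mod int n)" by (simp add: cong_def zmod_int)
  also have "[int k * int q = l * int q ^ j * int q] (mod int n)" using j by (rule cong_scalar_right)
  finally have "[int ((k * q) mod n) = l * int q ^ Suc j] (mod int n)" by (simp add: mult_ac)
  moreover have "(k * q) mod n < n" using n_ge_1 by simp
  ultimately show ?thesis unfolding mem_coset_iff by blast
qed

lemma times_q_mod_mem_coset_imp: "m < n \<Longrightarrow> (m * q) mod n \<in> coset l \<Longrightarrow> m \<in> coset l"
proof -
  assume m: "m < n" and mq: "(m * q) mod n \<in> coset l"
  have mm: "m \<in> coset (int m)" using mod_mem_coset[of "int m"] m by (simp add: nat_mod_as_int[symmetric])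
  have "(m * q) mod n \<in> coset (int m)" using times_q_mod_mem_coset[OF mm] .
  then have "coset (int ((m * q) mod n)) = coset (int m)" by (rule coset_eq_of_mem)
  moreover have "coset (int ((m * q) mod n)) = coset l" using mq by (rule coset_eq_of_mem)
  ultimately show ?thesis using mm by simp
qed

lemma times_q_mod_mem_coset_iff: "m < n \<Longrightarrow> (m * q) mod n \<in> coset l \<longleftrightarrow> m \<in> coset l"
  using times_q_mod_mem_coset_imp[of m l] times_q_mod_mem_coset[of m l] by blast

lemma bij_betw_times_q_mod_compl: "bij_betw (\<lambda>m. (m * q) mod n) ({..<n} - coset l) ({..<n} - coset l)"
proof -
  let ?A = "{..<n} - coset l"
  have inj: "inj_on (\<lambda>m. (m * q) mod n) ?A"
    using bij_betw_imp_inj_on[OF bij_betw_times_q_mod] by (rule inj_on_subset) auto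
  have sub: "(\<lambda>m. (m * q) mod n) ` ?A \<subseteq> ?A"
  proof
    fix x assume "x \<in> (\<lambda>m. (m * q) mod n) ` ?A"
    then obtain m where m: "m \<in> ?A" "x = (m * q) mod n" by blast
    then have "x < n" using n_ge_1 by simp
    moreover have "x \<notin> coset l" using m times_q_mod_mem_coset_imp[of m l] by auto
    ultimately show "x \<in> ?A" by simp
  qed
  have "(\<lambda>m. (m * q) mod n) ` ?A = ?A" using endo_inj_surj[OF _ sub inj] by simp
  then show ?thesis using inj unfolding bij_betw_def by simp
qed

lemma mem_coset_uminus_iff: "k < n \<Longrightarrow> (k \<in> coset (- l) \<longleftrightarrow> (n - k) mod n \<in> coset l)"
proof -
  assume k: "k < n"
  have e0: "int ((n - k) mod n) = (int n - int k) mod int n" using k by (simp add: zmod_int of_nat_diff)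
  have e1: "(int n - int k) mod int n = (- int k) mod int n" by (simp add: mod_diff_left_eq[symmetric])
  have "[int k = - l * int q ^ j] (mod int n) \<longleftrightarrow> [int ((n - k) mod n) = l * int q ^ j] (mod int n)" for j
  proof -
    have "[int k = - l * int q ^ j] (mod int n) \<longleftrightarrow> [- int k = l * int q ^ j] (mod int n)"
      using cong_minus_minus_iff[of "int k" "- l * int q ^ j" "int n"] by simp
    also have "\<dots> \<longleftrightarrow> [(- int k) mod int n = l * int q ^ j] (mod int n)" by simp
    finally show ?thesis using e0 e1 by simp
  qed
  then show ?thesis unfolding mem_coset_iff using k n_ge_1 by auto
qed

lemma coset_half:
  assumes "even n"
  shows "coset (int (n div 2)) = {n div 2}"
proof -
  let ?h = "n div 2"
  have "n = 2 * ?h" using assms by simp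
  have "odd q"
    using assms coprime_n_q coprime_common_divisor[of n q 2] by auto
  have fixed: "[int ?h * int q ^ j = int ?h] (mod int n)" for j
  proof -
    have "odd (q ^ j)" using \<open>odd q\<close> by simp
    then obtain c where c: "q ^ j = 2 * c + 1" using oddE by blast
    have "int ?h * int q ^ j - int ?h = int n * int c"
      using c \<open>n = 2 * ?h\<close> by (simp add: algebra_simps flip: of_nat_power)
    then show ?thesis by (simp add: cong_iff_dvd_diff)
  qed
  have "?h < n" using n_ge_1 by simp
  moreover have "m = ?h" if "[int m = int ?h * int q ^ j] (mod int n)" "m < n" for m j
    using cong_trans[OF that(1) fixed] that(2) \<open>?h < n\<close> by (simp add: cong_def)
  ultimately show ?thesis
    unfolding set_eq_iff mem_coset_iff by (auto intro: exI[of _ 0])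
qed

section \<open>Generator polynomials and idempotents\<close>

definition lin_factor :: "nat \<Rightarrow> 'e poly" where "lin_factor m = [:- (\<eta> ^ m), 1:]"

definition lin_prod :: "nat set \<Rightarrow> 'e poly" where "lin_prod S = (\<Prod>m\<in>S. lin_factor m)"

lemma lin_factor_neq_0: "lin_factor m \<noteq> 0" unfolding lin_factor_def by simp

lemma poly_lin_factor: "poly (lin_factor m) x = x - \<eta> ^ m" unfolding lin_factor_def by simp

lemma poly_lin_prod: "poly (lin_prod S) x = (\<Prod>m\<in>S. x - \<eta> ^ m)" unfolding lin_prod_def by (simp add: poly_prod poly_lin_factor)

lemma degree_lin_prod: "finite S \<Longrightarrow> degree (lin_prod S) = card S"
  unfolding lin_prod_def by (subst degree_prod_sum_eq) (auto simp: lin_factor_neq_0 lin_factor_def)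

lemma lead_coeff_lin_prod: "lead_coeff (lin_prod S) = 1" unfolding lin_prod_def by (simp add: lead_coeff_prod lin_factor_def)

lemma lin_prod_neq_0: "lin_prod S \<noteq> 0" using lead_coeff_lin_prod by (metis leading_coeff_0_iff zero_neq_one)

abbreviation Xn_minus_1 :: "'e poly" where "Xn_minus_1 \<equiv> Polynomial.monom 1 n - 1"

lemma poly_Xn_minus_1_eta_pow: "poly Xn_minus_1 (\<eta> ^ m) = 0"
proof -
  have "(\<eta> ^ m) ^ n = (\<eta> ^ n) ^ m" by (metis power_mult mult.commute)
  then show ?thesis by (simp add: poly_monom eta_n)
qed

lemma lin_prod_dvd_Xn_minus_1: "finite S \<Longrightarrow> S \<subseteq> {..<n} \<Longrightarrow> lin_prod S dvd Xn_minus_1"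
proof (induction S rule: finite_induct)
  case empty then show ?case by (simp add: lin_prod_def)
next
  case (insert x S)
  then obtain r where r: "Xn_minus_1 = lin_prod S * r" by auto
  have "poly (lin_prod S) (\<eta> ^ x) \<noteq> 0"
    unfolding poly_lin_prod using insert eta_pow_inj by (auto simp: prod_zero_iff)
  moreover have "poly (lin_prod S) (\<eta> ^ x) * poly r (\<eta> ^ x) = 0" using r poly_Xn_minus_1_eta_pow[of x] by (metis poly_mult)
  ultimately have "poly r (\<eta> ^ x) = 0" by simp
  then have "lin_factor x dvd r" unfolding lin_factor_def by (simp add: poly_eq_0_iff_dvd)
  then have "lin_factor x * lin_prod S dvd lin_prod S * r" by (simp add: mult.commute mult_dvd_mono)
  then show ?case using r insert by (simp add: lin_prod_def)
qed

lemma degree_Xn_minus_1: "degree Xn_minus_1 = n"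
proof -
  have "degree (Polynomial.monom (1::'e) n + (- 1)) = n" using n_ge_1 by (subst degree_add_eq_left) (auto simp: degree_monom_eq)
  then show ?thesis by simp
qed

lemma lead_coeff_Xn_minus_1: "lead_coeff Xn_minus_1 = 1" using degree_Xn_minus_1 n_ge_1 by simp

lemma Xn_minus_1_eq_lin_prod: "Xn_minus_1 = lin_prod {..<n}"
proof -
  obtain r where r: "Xn_minus_1 = lin_prod {..<n} * r" using lin_prod_dvd_Xn_minus_1[of "{..<n}"] by auto
  have "Xn_minus_1 \<noteq> 0"
  proof
    assume "Xn_minus_1 = 0" then have "lead_coeff Xn_minus_1 = 0" by (simp only: coeff_0)
    then show False using lead_coeff_Xn_minus_1 by simp
  qed
  then have rnz: "r \<noteq> 0" using r by auto
  have "degree Xn_minus_1 = degree (lin_prod {..<n}) + degree r" using r rnz lin_prod_neq_0 by (simp add: degree_mult_eq)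
  then have "degree r = 0" using degree_Xn_minus_1 degree_lin_prod[of "{..<n}"] by simp
  moreover have "lead_coeff r = 1" using r lead_coeff_Xn_minus_1 lead_coeff_lin_prod[of "{..<n}"] by (metis lead_coeff_mult mult_1)
  ultimately have "r = 1" using degree_0_id[of r] by (metis one_pCons)
  then show ?thesis using r by simp
qed

lemma fpoly_eq_lin_prod: "fpoly \<eta> q n l = lin_prod (coset l)" unfolding fpoly_def lin_prod_def lin_factor_def by simp

lemma gpoly_eq_lin_prod: "gpoly \<eta> q n l = lin_prod ({..<n} - coset l)"
proof -
  have "lin_prod {..<n} = lin_prod (coset l) * lin_prod ({..<n} - coset l)"
    unfolding lin_prod_def using prod.subset_diff[OF coset_subset[of l] finite_lessThan] by (simp add: mult.commute)
  then show ?thesis unfolding gpoly_def fpoly_eq_lin_prod Xn_minus_1_eq_lin_prod using lin_prod_neq_0 by simp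
qed

lemma degree_gpoly_less: "degree (gpoly \<eta> q n l) < n"
proof -
  have "card ({..<n} - coset l) < n"
  proof -
    have "card ({..<n} - coset l) = n - card (coset l)" using coset_subset finite_coset by (simp add: card_Diff_subset)
    moreover have "card (coset l) > 0" using finite_coset coset_nonempty by (simp add: card_gt_0_iff)
    ultimately show ?thesis using n_ge_1 by simp
  qed
  then show ?thesis unfolding gpoly_eq_lin_prod by (simp add: degree_lin_prod)
qed

definition gen :: "int \<Rightarrow> nat \<Rightarrow> 'e" where "gen l = (\<lambda>j. Polynomial.coeff (gpoly \<eta> q n l) j)"

lemma in_Rn_gen: "in_Rn (gen l)"
  unfolding in_Rn_def gen_def
proof (intro allI impI)
  fix j assume "n \<le> j"
  then have "degree (gpoly \<eta> q n l) < j" using degree_gpoly_less[of l] by simp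
  then show "Polynomial.coeff (gpoly \<eta> q n l) j = 0" by (rule coeff_eq_0)
qed

lemma dft_gen: "dft (gen l) m = poly (gpoly \<eta> q n l) (\<eta> ^ m)"
proof -
  let ?g = "gpoly \<eta> q n l"
  have "poly ?g (\<eta> ^ m) = (\<Sum>i\<le>degree ?g. Polynomial.coeff ?g i * (\<eta> ^ m) ^ i)" by (rule poly_altdef)
  also have "\<dots> = (\<Sum>i<n. Polynomial.coeff ?g i * (\<eta> ^ m) ^ i)"
    using degree_gpoly_less[of l] by (intro sum.mono_neutral_left) (auto simp: coeff_eq_0)
  also have "\<dots> = (\<Sum>j<n. Polynomial.coeff ?g j * \<eta> ^ (j * m))"
    by (intro sum.cong refl) (metis power_mult mult.commute)
  finally show ?thesis unfolding dft_def gen_def by simp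
qed

lemma dft_gen_prod: "dft (gen l) m = (\<Prod>m'\<in>{..<n} - coset l. \<eta> ^ m - \<eta> ^ m')"
  unfolding dft_gen gpoly_eq_lin_prod poly_lin_prod ..

lemma dft_gen_eq_0_iff: "m < n \<Longrightarrow> dft (gen l) m = 0 \<longleftrightarrow> m \<notin> coset l"
  unfolding dft_gen_prod using eta_pow_inj by (auto simp: prod_zero_iff finite_coset)

lemma dft_gen_times_q: "m < n \<Longrightarrow> dft (gen l) ((m * q) mod n) = dft (gen l) m ^ q"
proof -
  assume m: "m < n"
  let ?A = "{..<n} - coset l"
  have "dft (gen l) m ^ q = (\<Prod>m'\<in>?A. (\<eta> ^ m - \<eta> ^ m') ^ q)"
    unfolding dft_gen_prod by (rule prod_power_distrib)
  also have "\<dots> = (\<Prod>m'\<in>?A. \<eta> ^ ((m * q) mod n) - \<eta> ^ ((m' * q) mod n))"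
  proof (rule prod.cong[OF refl])
    fix m'
    have "(\<eta> ^ m - \<eta> ^ m') ^ q = (\<eta> ^ m) ^ q - (\<eta> ^ m') ^ q" using frobenius_diff[of _ _ 1] by simp
    also have "\<dots> = \<eta> ^ ((m * q) mod n) - \<eta> ^ ((m' * q) mod n)"
      by (simp add: power_mult[symmetric] eta_pow_mod[symmetric])
    finally show "(\<eta> ^ m - \<eta> ^ m') ^ q = \<eta> ^ ((m * q) mod n) - \<eta> ^ ((m' * q) mod n)" .
  qed
  also have "\<dots> = (\<Prod>m'\<in>?A. \<eta> ^ ((m * q) mod n) - \<eta> ^ m')"
    by (rule prod.reindex_bij_betw[OF bij_betw_times_q_mod_compl])
  also have "\<dots> = dft (gen l) ((m * q) mod n)" unfolding dft_gen_prod ..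
  finally show ?thesis by simp
qed

definition idem :: "int \<Rightarrow> nat \<Rightarrow> 'e" where
  "idem l = idft (\<lambda>m. if m \<in> coset l then 1 else 0)"

definition gen_cofactor :: "int \<Rightarrow> nat \<Rightarrow> 'e" where
  "gen_cofactor l = idft (\<lambda>m. if m \<in> coset l then inverse (dft (gen l) m) else 0)"

lemma idem_in_vecs_Fq: "idem l \<in> vecs (Fsub q) n"
  unfolding idem_def by (rule idft_in_vecs_Fq) (use q_gt_0 in \<open>auto simp: times_q_mod_mem_coset_iff\<close>)

lemma gen_cofactor_in_vecs_Fq: "gen_cofactor l \<in> vecs (Fsub q) n"
  unfolding gen_cofactor_def by (rule idft_in_vecs_Fq) (use q_gt_0 in \<open>auto simp: times_q_mod_mem_coset_iff dft_gen_times_q power_inverse\<close>)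

lemma gen_in_vecs_Fq: "gen l \<in> vecs (Fsub q) n"
proof -
  have "gen l = idft (dft (gen l))" by (rule dft_injective) (auto simp: in_Rn_gen in_Rn_idft dft_idft)
  also have "\<dots> \<in> vecs (Fsub q) n" by (rule idft_in_vecs_Fq) (simp add: dft_gen_times_q)
  finally show ?thesis .
qed

lemma in_Rn_idem: "in_Rn (idem l)" unfolding idem_def by (rule in_Rn_idft)

lemma dft_idem: "m < n \<Longrightarrow> dft (idem l) m = (if m \<in> coset l then 1 else 0)" unfolding idem_def by (simp add: dft_idft)

lemma rmul_gen_cofactor_gen: "rmul n (gen_cofactor l) (gen l) = idem l"
  by (rule dft_injective) (auto simp: in_Rn_rmul in_Rn_idem dft_rmul dft_idem gen_cofactor_def dft_idft dft_gen_eq_0_iff)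

lemma rmul_idem_gen: "rmul n (idem l) (gen l) = gen l"
  by (rule dft_injective) (auto simp: in_Rn_rmul in_Rn_gen dft_rmul dft_idem dft_gen_eq_0_iff)

lemma ideal_gen_gpoly_eq:
  "ideal_gen (Fsub (q ^ w)) n (gpoly \<eta> q n l) = {c \<in> vecs (Fsub (q ^ w)) n. rmul n (idem l) c = c}"
proof -
  have gvd: "(\<lambda>k. Polynomial.coeff (gpoly \<eta> q n l) k) = gen l" unfolding gen_def ..
  show ?thesis
    unfolding set_eq_iff
  proof (intro allI iffI)
    fix c assume "c \<in> ideal_gen (Fsub (q ^ w)) n (gpoly \<eta> q n l)"
    then obtain b where b: "b \<in> vecs (Fsub (q ^ w)) n" "c = rmul n b (gen l)"
      unfolding ideal_gen_def gvd by auto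
    have "c \<in> vecs (Fsub (q ^ w)) n" using b rmul_in_vecs[OF b(1) vecs_Fq_into_power[OF gen_in_vecs_Fq]] by simp
    moreover have "rmul n (idem l) c = c"
    proof -
      have "rmul n (idem l) (rmul n b (gen l)) = rmul n (rmul n b (gen l)) (idem l)" by (rule rmul_commute)
      also have "\<dots> = rmul n b (rmul n (gen l) (idem l))" by (rule rmul_assoc)
      also have "\<dots> = rmul n b (gen l)" by (simp add: rmul_commute[of "gen l"] rmul_idem_gen)
      finally show ?thesis using b by simp
    qed
    ultimately show "c \<in> {c \<in> vecs (Fsub (q ^ w)) n. rmul n (idem l) c = c}" by simp
  next
    fix c assume "c \<in> {c \<in> vecs (Fsub (q ^ w)) n. rmul n (idem l) c = c}"
    then have c: "c \<in> vecs (Fsub (q ^ w)) n" "rmul n (idem l) c = c" by auto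
    have "c = rmul n (rmul n (gen_cofactor l) (gen l)) c" using c(2) by (simp add: rmul_gen_cofactor_gen)
    also have "\<dots> = rmul n c (rmul n (gen_cofactor l) (gen l))" by (rule rmul_commute)
    also have "\<dots> = rmul n (rmul n c (gen_cofactor l)) (gen l)" by (rule rmul_assoc[symmetric])
    finally have "c = rmul n (rmul n c (gen_cofactor l)) (gen l)" .
    moreover have "rmul n c (gen_cofactor l) \<in> vecs (Fsub (q ^ w)) n" using rmul_in_vecs[OF c(1) vecs_Fq_into_power[OF gen_cofactor_in_vecs_Fq]] by simp
    ultimately show "c \<in> ideal_gen (Fsub (q ^ w)) n (gpoly \<eta> q n l)" unfolding ideal_gen_def gvd by auto
  qed
qed

lemma Jid_eq: "Jid q t n \<eta> l = {c \<in> vecs (Fsub (q ^ t)) n. rmul n (idem l) c = c}"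
  unfolding Jid_def by (rule ideal_gen_gpoly_eq)

lemma Kid_eq: "Kid q n \<eta> l = {c \<in> vecs (Fsub q) n. rmul n (idem l) c = c}"
  unfolding Kid_def using ideal_gen_gpoly_eq[of 1 l] by simp

section \<open>Cyclic codes as submodules\<close>

lemma cyclic_code_subset_vecs: "cyclic_code q t n (C :: (nat \<Rightarrow> 'e) set) \<Longrightarrow> C \<subseteq> vecs (Fsub (q ^ t)) n"
  unfolding cyclic_code_def lin_code_def by auto

lemma cyclic_code_zvec: "cyclic_code q t n (C :: (nat \<Rightarrow> 'e) set) \<Longrightarrow> zvec \<in> C"
  unfolding cyclic_code_def lin_code_def by auto

lemma cyclic_code_add: "cyclic_code q t n (C :: (nat \<Rightarrow> 'e) set) \<Longrightarrow> a \<in> C \<Longrightarrow> b \<in> C \<Longrightarrow> (\<lambda>k. a k + b k) \<in> C"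
  unfolding cyclic_code_def lin_code_def by auto

lemma cyclic_code_scale: "cyclic_code q t n (C :: (nat \<Rightarrow> 'e) set) \<Longrightarrow> c \<in> Fsub q \<Longrightarrow> a \<in> C \<Longrightarrow> (\<lambda>k. c * a k) \<in> C"
  unfolding cyclic_code_def lin_code_def by auto

lemma cyclic_code_cshift: "cyclic_code q t n (C :: (nat \<Rightarrow> 'e) set) \<Longrightarrow> a \<in> C \<Longrightarrow> cshift n a \<in> C"
  unfolding cyclic_code_def by auto

lemma cyclic_code_cshift_iter: "cyclic_code q t n (C :: (nat \<Rightarrow> 'e) set) \<Longrightarrow> a \<in> C \<Longrightarrow> (cshift n ^^ j) a \<in> C"
  by (induction j) (auto simp: cyclic_code_cshift)

lemma cyclic_code_sum:
  fixes C :: "(nat \<Rightarrow> 'e) set"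
  assumes C: "cyclic_code q t n C"
  shows "finite A \<Longrightarrow> (\<And>i. i \<in> A \<Longrightarrow> f i \<in> C) \<Longrightarrow> (\<lambda>k. \<Sum>i\<in>A. f i k) \<in> C"
proof (induction A rule: finite_induct)
  case empty then show ?case using cyclic_code_zvec[OF C] by (simp add: zvec_def)
next
  case (insert x A)
  then show ?case using cyclic_code_add[OF C, of "f x" "\<lambda>k. \<Sum>i\<in>A. f i k"] by simp
qed

lemma cyclic_code_rmul:
  fixes C :: "(nat \<Rightarrow> 'e) set"
  assumes C: "cyclic_code q t n C" and x: "x \<in> vecs (Fsub q) n" and a: "a \<in> C"
  shows "rmul n x a \<in> C"
proof -
  have "in_Rn a" using cyclic_code_subset_vecs[OF C] a vecs_in_Rn by blast
  then have "rmul n x a = (\<lambda>k. \<Sum>j<n. x j * (cshift n ^^ j) a k)" by (rule rmul_eq_sum_cshift_iter)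
  also have "\<dots> \<in> C"
    by (rule cyclic_code_sum[OF C]) (use x in \<open>auto simp: vecs_def intro!: cyclic_code_scale[OF C] cyclic_code_cshift_iter[OF C a]\<close>)
  finally show ?thesis .
qed

lemma cyclic_codeI:
  fixes C :: "(nat \<Rightarrow> 'e) set"
  assumes "C \<subseteq> vecs (Fsub (q ^ t)) n" and "zvec \<in> C"
    and "\<And>a b. a \<in> C \<Longrightarrow> b \<in> C \<Longrightarrow> (\<lambda>k. a k + b k) \<in> C"
    and rmul_closed: "\<And>x a. x \<in> vecs (Fsub q) n \<Longrightarrow> a \<in> C \<Longrightarrow> rmul n x a \<in> C"
  shows "cyclic_code q t n C"
  unfolding cyclic_code_def lin_code_def
proof (intro conjI ballI)
  fix c :: 'e and a assume c: "c \<in> Fsub q" and a: "a \<in> C"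
  then have "in_Rn a" using assms(1) vecs_in_Rn by blast
  have "rmul n (\<lambda>k. c * unit_vec k) a = rmul n a (\<lambda>k. c * unit_vec k)" by (rule rmul_commute)
  also have "\<dots> = (\<lambda>k. c * rmul n a unit_vec k)" by (rule rmul_scale_right)
  also have "rmul n a unit_vec = a" using rmul_unit_vec[OF \<open>in_Rn a\<close>] by (simp add: rmul_commute)
  finally have "(\<lambda>k. c * a k) = rmul n (\<lambda>k. c * unit_vec k) a" by simp
  moreover have "(\<lambda>k. c * unit_vec k) \<in> vecs (Fsub q) n"
    using unit_vec_in_vecs_Fq c by (auto simp: vecs_def intro: Fsub_mult)
  ultimately show "(\<lambda>k. c * a k) \<in> C" using rmul_closed a by simp
next
  fix a assume a: "a \<in> C"
  then have "cshift n a = rmul n (cshift n unit_vec) a"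
    using assms(1) cshift_eq_rmul vecs_in_Rn by blast
  moreover have "cshift n unit_vec \<in> vecs (Fsub q) n"
    using cshift_in_vecs[of unit_vec 1] unit_vec_in_vecs_Fq by simp
  ultimately show "cshift n a \<in> C" using rmul_closed a by simp
qed (use assms in auto)

section \<open>The forms as traces of twisted inner products\<close>

definition rot :: "nat \<Rightarrow> (nat \<Rightarrow> 'e) \<Rightarrow> nat \<Rightarrow> 'e" where
  "rot j c = (\<lambda>i. if i < n then c (nat ((int i - int j) mod int n)) else 0)"

lemma rot_0: "in_Rn c \<Longrightarrow> rot 0 c = c"
  unfolding rot_def in_Rn_def by (auto simp: fun_eq_iff)

lemma rot_Suc: "rot (Suc j) c = cshift n (rot j c)"
proof
  fix i show "rot (Suc j) c i = cshift n (rot j c) i"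
  proof (cases "i < n")
    case True
    have a: "(i + n - 1) mod n < n" using n_ge_1 by simp
    have e1: "int ((i + n - 1) mod n) = (int i - 1) mod int n"
    proof -
      have "int ((i + n - 1) mod n) = int (i + n - 1) mod int n" by (simp add: zmod_int)
      also have "int (i + n - 1) = (int i - 1) + int n" using n_ge_1 by simp
      finally show ?thesis by simp
    qed
    have "(int ((i + n - 1) mod n) - int j) mod int n = ((int i - 1) mod int n - int j) mod int n"
      by (simp only: e1)
    also have "\<dots> = (int i - 1 - int j) mod int n" by (rule mod_diff_left_eq)
    also have "int i - 1 - int j = int i - int (Suc j)" by simp
    finally have "(int ((i + n - 1) mod n) - int j) mod int n = (int i - int (Suc j)) mod int n" .
    then show ?thesis unfolding rot_def cshift_def using True a by simp
  next
    case False then show ?thesis by (simp add: rot_def cshift_def)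
  qed
qed

lemma rot_mem:
  assumes "\<And>a. a \<in> D \<Longrightarrow> cshift n a \<in> D" and "\<And>a. a \<in> D \<Longrightarrow> in_Rn a" and "c \<in> D"
  shows "rot k c \<in> D"
  by (induction k) (use assms rot_0 rot_Suc in auto)

lemma nat_mod_less_n: "nat (x mod int n) < n" using n_ge_1 by (simp add: nat_less_iff)

lemma int_nat_mod: "int (nat (x mod int n)) = x mod int n" using n_ge_1 by simp

lemma tau_one: "k < n \<Longrightarrow> tau n r 1 X k = X k ^ r"
proof -
  assume k: "k < n"
  have "tau n r 1 X k = (\<Sum>i<n. if (1 * int i) mod int n = int k then X i ^ r else 0)"
    unfolding tau_def using k by simp
  also have "\<dots> = (\<Sum>i<n. if i = k then X i ^ r else 0)"
    by (intro sum.cong refl) auto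
  finally have "tau n r 1 X k = (\<Sum>i<n. if i = k then X i ^ r else 0)" .
  then show ?thesis using k by simp
qed

lemma uminus_index_iff: "i < n \<Longrightarrow> v < n \<Longrightarrow> ((-1) * int i) mod int n = int v \<longleftrightarrow> i = nat ((- int v) mod int n)"
proof -
  assume i: "i < n" and v: "v < n"
  have iv: "int i mod int n = int i" "int v mod int n = int v" using i v by simp_all
  have "((-1) * int i) mod int n = int v \<longleftrightarrow> [- int i = int v] (mod int n)"
    using iv by (simp add: cong_def)
  also have "\<dots> \<longleftrightarrow> [int i = - int v] (mod int n)"
    using cong_minus_minus_iff[of "int i" "- int v" "int n"] by simp
  also have "\<dots> \<longleftrightarrow> int i = (- int v) mod int n" using iv by (simp add: cong_def)
  also have "\<dots> \<longleftrightarrow> i = nat ((- int v) mod int n)" using int_nat_mod[of "- int v"] by linarith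
  finally show ?thesis .
qed

lemma tau_uminus_one: "v < n \<Longrightarrow> tau n r (-1) c v = c (nat ((- int v) mod int n)) ^ r"
proof -
  assume v: "v < n"
  have "tau n r (-1) c v = (\<Sum>i<n. if ((-1) * int i) mod int n = int v then c i ^ r else 0)"
    unfolding tau_def using v by simp
  also have "\<dots> = (\<Sum>i<n. if i = nat ((- int v) mod int n) then c i ^ r else 0)"
    using v by (intro sum.cong refl) (simp only: lessThan_iff uminus_index_iff)
  finally have "tau n r (-1) c v = (\<Sum>i<n. if i = nat ((- int v) mod int n) then c i ^ r else 0)" .
  then show ?thesis using nat_mod_less_n by simp
qed

lemma add_index_iff: "u < n \<Longrightarrow> v < n \<Longrightarrow> k < n \<Longrightarrow> (u + v) mod n = k \<longleftrightarrow> v = nat ((int k - int u) mod int n)"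
proof -
  assume u: "u < n" and v: "v < n" and k: "k < n"
  have "(u + v) mod n = k \<longleftrightarrow> (int u + int v) mod int n = int k" using k
    by (metis of_nat_add of_nat_eq_iff zmod_int mod_less)
  also have "\<dots> \<longleftrightarrow> [int u + int v = int k] (mod int n)" using k by (simp add: cong_def)
  also have "\<dots> \<longleftrightarrow> [int v = int k - int u] (mod int n)" by (simp add: cong_iff_dvd_diff algebra_simps)
  also have "\<dots> \<longleftrightarrow> int v = (int k - int u) mod int n" using v by (simp add: cong_def)
  also have "\<dots> \<longleftrightarrow> v = nat ((int k - int u) mod int n)" using int_nat_mod[of "int k - int u"] by linarith
  finally show ?thesis .
qed

lemma rmul_eq_sum_diff: "k < n \<Longrightarrow> rmul n a b k = (\<Sum>u<n. a u * b (nat ((int k - int u) mod int n)))"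
proof -
  assume k: "k < n"
  have "rmul n a b k = (\<Sum>u<n. \<Sum>v<n. if (u + v) mod n = k then a u * b v else 0)"
    unfolding rmul_def using k by simp
  also have "\<dots> = (\<Sum>u<n. \<Sum>v<n. if v = nat ((int k - int u) mod int n) then a u * b v else 0)"
    using k by (intro sum.cong refl) (simp only: lessThan_iff add_index_iff)
  finally have "rmul n a b k = (\<Sum>u<n. \<Sum>v<n. if v = nat ((int k - int u) mod int n) then a u * b v else 0)" .
  then show ?thesis using nat_mod_less_n by simp
qed

lemma uminus_diff_index: "nat ((- int (nat ((int k - int u) mod int n))) mod int n) = nat ((int u - int k) mod int n)"
proof -
  have "(- int (nat ((int k - int u) mod int n))) mod int n = (- ((int k - int u) mod int n)) mod int n"
    by (simp only: int_nat_mod)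
  also have "\<dots> = (- (int k - int u)) mod int n" by (simp add: mod_minus_eq)
  finally show ?thesis by simp
qed

lemma rmul_reflected_eq_sum_rot:
  assumes B: "\<And>v. v < n \<Longrightarrow> B v = F (c (nat ((- int v) mod int n)))" and k: "k < n"
  shows "rmul n A B k = (\<Sum>u<n. A u * F (rot k c u))"
  unfolding rmul_eq_sum_diff[OF k] rot_def
  by (intro sum.cong refl) (simp only: B nat_mod_less_n uminus_diff_index lessThan_iff if_True)

lemma zero_power_q_pow: "(0::'e) ^ (q ^ w) = 0" using q_gt_0 by simp

lemma trace_sum: "trace q t (\<Sum>i\<in>A. f i :: 'e) = (\<Sum>i\<in>A. trace q t (f i))"
  unfolding trace_def by (simp add: frobenius_sum) (rule sum.swap)

lemma trace_0: "trace q t (0::'e) = 0" unfolding trace_def by (simp add: zero_power_q_pow)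

lemma bform_eq_vform_rot: "bform q t n \<delta> a c = (\<lambda>k. if k < n then vform q t n \<delta> a (rot k c) else 0)"
proof
  fix k show "bform q t n \<delta> a c k = (if k < n then vform q t n \<delta> a (rot k c) else 0)"
  proof (cases "k < n")
    case False
    then show ?thesis unfolding bform_def tau_def by (cases \<delta>) auto
  next
    case k: True
    have tr: "(\<Sum>w<t. tau n (q ^ w) 1 X k) = trace q t (X k)" for X :: "nat \<Rightarrow> 'e"
      unfolding trace_def by (rule sum.cong[OF refl], rule tau_one[OF k])
    show ?thesis
    proof (cases \<delta>)
      case Star
      have "rmul n a (\<lambda>i. \<Sum>w\<in>{1..<t}. tau n (q ^ w) (-1) c i) k = (\<Sum>u<n. a u * phi q t (rot k c u))"
        by (rule rmul_reflected_eq_sum_rot[OF _ k]) (simp add: tau_uminus_one phi_def)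
      then show ?thesis using k Star unfolding bform_def vform_def by (simp add: tr trace_sum)
    next
      case Ord
      have "rmul n a (tau n 1 (-1) c) k = (\<Sum>u<n. a u * (\<lambda>x. x) (rot k c u))"
        by (rule rmul_reflected_eq_sum_rot[OF _ k]) (simp add: tau_uminus_one)
      then show ?thesis using k Ord unfolding bform_def vform_def by (simp add: tr trace_sum)
    next
      case (Herm \<gamma>)
      have "rmul n (\<lambda>i. \<gamma> * a i) (tau n (q ^ (t div 2)) (-1) c) k = (\<Sum>u<n. (\<gamma> * a u) * (\<lambda>x. x ^ (q ^ (t div 2))) (rot k c u))"
        by (rule rmul_reflected_eq_sum_rot[OF _ k]) (simp add: tau_uminus_one)
      then show ?thesis using k Herm unfolding bform_def vform_def by (simp add: tr trace_sum mult.assoc)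
    qed
  qed
qed

lemma all_bform_eq_zvec_iff:
  assumes "\<And>c. c \<in> D \<Longrightarrow> cshift n c \<in> D" and "\<And>c. c \<in> D \<Longrightarrow> in_Rn c"
  shows "(\<forall>c\<in>D. bform q t n \<delta> a c = zvec) \<longleftrightarrow> (\<forall>c\<in>D. vform q t n \<delta> a c = 0)"
proof
  assume all_zero: "\<forall>c\<in>D. bform q t n \<delta> a c = zvec"
  show "\<forall>c\<in>D. vform q t n \<delta> a c = 0"
  proof
    fix c assume c: "c \<in> D"
    have "vform q t n \<delta> a c = bform q t n \<delta> a c 0"
      using n_ge_1 rot_0[OF assms(2)[OF c]] by (simp add: bform_eq_vform_rot)
    then show "vform q t n \<delta> a c = 0" using all_zero c by (simp add: zvec_def)
  qed
next
  assume "\<forall>c\<in>D. vform q t n \<delta> a c = 0"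
  then show "\<forall>c\<in>D. bform q t n \<delta> a c = zvec"
    using rot_mem[OF assms] by (simp add: bform_eq_vform_rot zvec_def fun_eq_iff)
qed

definition twist :: "nat \<Rightarrow> 'e form_kind \<Rightarrow> 'e \<Rightarrow> 'e" where
  "twist t \<delta> x = (case \<delta> of Ord \<Rightarrow> x | Herm \<gamma> \<Rightarrow> \<gamma> * x ^ (q ^ (t div 2)) | Star \<Rightarrow> phi q t x)"

lemma twist_0: "twist t \<delta> 0 = 0"
  unfolding twist_def phi_def by (cases \<delta>) (auto simp: zero_power_q_pow)

lemma vform_eq_trace_twist: "vform q t n \<delta> a b = trace q t (\<Sum>j<n. a j * twist t \<delta> (b j))"
  unfolding vform_def twist_def trace_sum by (cases \<delta>) (auto simp: mult_ac)

lemma in_Rn_twist: "in_Rn c \<Longrightarrow> in_Rn (\<lambda>j. twist t \<delta> (c j))" unfolding in_Rn_def by (simp add: twist_0)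

lemma twist_rmul:
  assumes e: "e \<in> vecs (Fsub q) n"
  shows "(\<lambda>j. twist t \<delta> (rmul n e c j)) = rmul n e (\<lambda>j. twist t \<delta> (c j))"
proof (cases \<delta>)
  case Star
  have "(\<lambda>j. phi q t (rmul n e c j)) = (\<lambda>j. \<Sum>w\<in>{1..<t}. rmul n e (\<lambda>i. c i ^ (q ^ w)) j)"
    unfolding phi_def using rmul_frobenius[OF e] by simp
  also have "\<dots> = rmul n e (\<lambda>j. \<Sum>w\<in>{1..<t}. c j ^ (q ^ w))" by (rule rmul_sum_right[symmetric]) simp
  finally show ?thesis using Star unfolding twist_def phi_def by simp
next
  case Ord then show ?thesis unfolding twist_def by simp
next
  case (Herm \<gamma>)
  have "(\<lambda>j. \<gamma> * rmul n e c j ^ (q ^ (t div 2))) = (\<lambda>j. \<gamma> * rmul n e (\<lambda>i. c i ^ (q ^ (t div 2))) j)"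
    using rmul_frobenius[OF e] by simp
  also have "\<dots> = rmul n e (\<lambda>j. \<gamma> * c j ^ (q ^ (t div 2)))" by (rule rmul_scale_right[symmetric])
  finally show ?thesis using Herm unfolding twist_def by simp
qed

lemma eta_pow_diff_mod: "k < n \<Longrightarrow> \<eta> ^ (j * ((n - k) mod n)) = inverse \<eta> ^ (j * k)"
proof -
  assume k: "k < n"
  have "\<eta> ^ (j * ((n - k) mod n)) = \<eta> ^ (j * (n - k))"
    by (metis eta_pow_mod_mult mult.commute)
  moreover have "\<eta> ^ (j * (n - k)) * \<eta> ^ (j * k) = 1"
  proof -
    have "\<eta> ^ (j * (n - k)) * \<eta> ^ (j * k) = \<eta> ^ (n * j)" using k
      by (simp flip: power_add add: algebra_simps)
    also have "\<dots> = 1" by (simp add: power_mult eta_n)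
    finally show ?thesis .
  qed
  ultimately show ?thesis using eta_neq_0 by (simp add: power_inverse field_simps)
qed

lemma parseval:
  assumes "in_Rn y"
  shows "(\<Sum>j<n. a j * y j) = inverse (of_nat n) * (\<Sum>k<n. dft y k * dft a ((n - k) mod n))"
proof -
  have "(\<Sum>j<n. a j * y j) = (\<Sum>j<n. a j * (inverse (of_nat n) * (\<Sum>k<n. dft y k * inverse \<eta> ^ (j * k))))"
    by (intro sum.cong refl) (metis dft_inversion[OF assms] lessThan_iff)
  also have "\<dots> = inverse (of_nat n) * (\<Sum>k<n. dft y k * (\<Sum>j<n. a j * inverse \<eta> ^ (j * k)))"
  proof -
    have "(\<Sum>j<n. a j * (inverse (of_nat n) * (\<Sum>k<n. dft y k * inverse \<eta> ^ (j * k))))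
        = inverse (of_nat n) * (\<Sum>j<n. \<Sum>k<n. dft y k * (a j * inverse \<eta> ^ (j * k)))"
      by (simp only: sum_distrib_left) (simp only: mult_ac)
    also have "\<dots> = inverse (of_nat n) * (\<Sum>k<n. \<Sum>j<n. dft y k * (a j * inverse \<eta> ^ (j * k)))"
      by (subst sum.swap) (rule refl)
    also have "\<dots> = inverse (of_nat n) * (\<Sum>k<n. dft y k * (\<Sum>j<n. a j * inverse \<eta> ^ (j * k)))"
      by (simp only: sum_distrib_left)
    finally show ?thesis .
  qed
  also have "\<dots> = inverse (of_nat n) * (\<Sum>k<n. dft y k * dft a ((n - k) mod n))"
    unfolding dft_def by (intro arg_cong[where f="\<lambda>x. inverse (of_nat n) * x"] sum.cong refl) (simp add: eta_pow_diff_mod)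
  finally show ?thesis .
qed

lemma vform_zvec_left: "vform q t n \<delta> zvec (c :: nat \<Rightarrow> 'e) = 0"
  unfolding vform_def zvec_def by (cases \<delta>) (simp_all add: trace_0)

lemma zvec_in_dual: "zvec \<in> dual q t n \<delta> (C :: (nat \<Rightarrow> 'e) set)" unfolding dual_def by (simp add: zvec_in_vecs vform_zvec_left)

end

section \<open>Decomposition along the cyclotomic cosets\<close>

locale coset_decomposition = cyclotomic_setting p q ke n \<eta> for p q ke n :: nat and \<eta> :: "'e::field" +
  fixes s :: nat and ell :: "nat \<Rightarrow> nat"
  assumes ell_0: "ell 0 = 0" and ell_less_n: "\<forall>i<s. ell i < n"
    and ell_inj: "\<forall>i<s. \<forall>j<s. cyc_coset q n (int (ell i)) = cyc_coset q n (int (ell j)) \<longrightarrow> i = j"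
    and cosets_cover: "\<forall>m<n. \<exists>i<s. m \<in> cyc_coset q n (int (ell i))"
begin

abbreviation "\<mu> \<equiv> mu q n s ell"

lemma coset_rep_unique: "i < s \<Longrightarrow> j < s \<Longrightarrow> m \<in> coset (int (ell i)) \<Longrightarrow> m \<in> coset (int (ell j)) \<Longrightarrow> i = j"
  using coset_eq_of_mem ell_inj by metis

lemma coset_rep_exists: "m < n \<Longrightarrow> \<exists>i<s. m \<in> coset (int (ell i))" using cosets_cover by blast

lemma s_gt_0: "0 < s" using coset_rep_exists[of 0] n_ge_1 by auto

lemma mu_eqI: "i < s \<Longrightarrow> j < s \<Longrightarrow> coset (- int (ell i)) = coset (int (ell j)) \<Longrightarrow> \<mu> i = j"
  unfolding mu_def
  by (rule the_equality) (auto, metis ell_inj)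

lemma mu_coset: "i < s \<Longrightarrow> \<mu> i < s \<and> coset (- int (ell i)) = coset (int (ell (\<mu> i)))"
proof -
  assume i: "i < s"
  let ?m = "nat ((- int (ell i)) mod int n)"
  have m: "?m \<in> coset (- int (ell i))" by (rule mod_mem_coset)
  then have "?m < n" by (rule coset_less_n)
  then obtain j where j: "j < s" "?m \<in> coset (int (ell j))" using coset_rep_exists by blast
  have "coset (int (ell j)) = coset (int ?m)" using coset_eq_of_mem[OF j(2)] by simp
  also have "\<dots> = coset (- int (ell i))" using coset_eq_of_mem[OF m] .
  finally have e: "coset (- int (ell i)) = coset (int (ell j))" by simp
  then have "\<mu> i = j" using mu_eqI i j by blast
  then show ?thesis using e j by simp
qed

lemma mu_less_s: "i < s \<Longrightarrow> \<mu> i < s" using mu_coset by blast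

lemma diff_mod_diff_mod: "m < n \<Longrightarrow> (n - (n - m) mod n) mod n = m"
  by (cases "m = 0") (auto simp: mod_if)

lemma mem_coset_mu_iff: "i < s \<Longrightarrow> m < n \<Longrightarrow> (m \<in> coset (int (ell i)) \<longleftrightarrow> (n - m) mod n \<in> coset (int (ell (\<mu> i))))"
proof -
  assume i: "i < s" and m: "m < n"
  have "(n - m) mod n < n" using n_ge_1 by simp
  then have "(n - m) mod n \<in> coset (- int (ell i)) \<longleftrightarrow> (n - (n - m) mod n) mod n \<in> coset (int (ell i))"
    by (rule mem_coset_uminus_iff)
  then show ?thesis using mu_coset[OF i] diff_mod_diff_mod[OF m] by simp
qed

lemma mu_mu: "i < s \<Longrightarrow> \<mu> (\<mu> i) = i"
proof -
  assume i: "i < s"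
  have mi: "\<mu> i < s" using mu_coset i by blast
  have "coset (- int (ell (\<mu> i))) = coset (int (ell i))"
    unfolding set_eq_iff
  proof (intro allI)
    fix m
    show "m \<in> coset (- int (ell (\<mu> i))) \<longleftrightarrow> m \<in> coset (int (ell i))"
    proof (cases "m < n")
      case True
      have "m \<in> coset (- int (ell (\<mu> i))) \<longleftrightarrow> (n - m) mod n \<in> coset (int (ell (\<mu> i)))" using mem_coset_uminus_iff True by blast
      also have "\<dots> \<longleftrightarrow> m \<in> coset (int (ell i))" using mem_coset_mu_iff[OF i True] by simp
      finally show ?thesis .
    next
      case False then show ?thesis using coset_less_n by blast
    qed
  qed
  then show ?thesis using mu_eqI[OF mi i] by blast
qed

lemma mu_0: "\<mu> 0 = 0"
  using mu_eqI[OF s_gt_0 s_gt_0] ell_0 by simp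

lemma Iset_subset_fixed_points: "Iset q n s ell \<subseteq> {i. i < s \<and> \<mu> i = i}"
proof (cases "odd n")
  case False
  let ?h = "n div 2"
  obtain j where j: "j < s" "?h \<in> coset (int (ell j))"
    using coset_rep_exists[of ?h] n_ge_1 by auto
  have coset_j: "coset (int (ell j)) = {?h}"
    using coset_eq_of_mem[OF j(2)] coset_half False by simp
  have the_j: "(THE j. j < s \<and> coset (int (ell j)) = {?h}) = j"
    by (rule the_equality) (use j coset_j ell_inj in auto)
  have "ell j = ?h"
    using mod_mem_coset[of "int (ell j)"] ell_less_n j(1) coset_j by simp
  moreover have "n = 2 * ?h" using False by simp
  then have "int n = 2 * int ?h" by linarith
  ultimately have "[- int (ell j) = int (ell j)] (mod int n)"
    by (simp add: cong_iff_dvd_diff)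
  then have "\<mu> j = j" using mu_eqI j(1) coset_cong by blast
  then show ?thesis using j(1) False the_j mu_0 s_gt_0 unfolding Iset_def by auto
qed (use mu_0 s_gt_0 in \<open>auto simp: Iset_def\<close>)

definition E :: "nat \<Rightarrow> nat \<Rightarrow> 'e" where "E i = idem (int (ell i))"

lemma E_in_vecs_Fq: "E i \<in> vecs (Fsub q) n" unfolding E_def by (rule idem_in_vecs_Fq)

lemma E_in_vecs: "E i \<in> vecs (Fsub (q ^ t)) n" using E_in_vecs_Fq vecs_Fq_into_power by blast

lemma in_Rn_E: "in_Rn (E i)" unfolding E_def by (rule in_Rn_idem)

lemma dft_E: "m < n \<Longrightarrow> dft (E i) m = (if m \<in> coset (int (ell i)) then 1 else 0)" unfolding E_def by (rule dft_idem)

lemma E_orthogonal: "i < s \<Longrightarrow> j < s \<Longrightarrow> i \<noteq> j \<Longrightarrow> rmul n (E i) (E j) = zvec"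
  by (rule dft_injective) (auto simp: in_Rn_rmul in_Rn_zvec dft_rmul dft_E dft_zvec dest: coset_rep_unique)

lemma E_idem: "rmul n (E i) (E i) = E i"
  by (rule dft_injective) (auto simp: in_Rn_rmul in_Rn_E dft_rmul dft_E)

lemma rmul_E_idem: "rmul n (E i) (rmul n (E i) c) = rmul n (E i) c"
  by (simp add: rmul_assoc[symmetric] E_idem)

lemma sum_coset_indicator: "m < n \<Longrightarrow> (\<Sum>i<s. (if m \<in> coset (int (ell i)) then 1 else 0) * (x::'e)) = x"
proof -
  assume m: "m < n"
  obtain i0 where i0: "i0 < s" "m \<in> coset (int (ell i0))" using coset_rep_exists[OF m] by blast
  have "(\<Sum>i<s. (if m \<in> coset (int (ell i)) then 1 else 0) * x) = (\<Sum>i<s. if i = i0 then x else 0)"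
    by (rule sum.cong[OF refl]) (use i0 coset_rep_unique in auto)
  also have "\<dots> = x" using i0 by simp
  finally show ?thesis .
qed

lemma sum_E_decomposition: "in_Rn c \<Longrightarrow> c = (\<lambda>k. \<Sum>i<s. rmul n (E i) c k)"
  by (rule dft_injective) (auto simp: in_Rn_sum in_Rn_rmul dft_sum dft_rmul dft_E sum_coset_indicator)

abbreviation J :: "nat \<Rightarrow> nat \<Rightarrow> (nat \<Rightarrow> 'e) set" where "J t i \<equiv> Jid q t n \<eta> (int (ell i))"

abbreviation K :: "nat \<Rightarrow> (nat \<Rightarrow> 'e) set" where "K i \<equiv> Kid q n \<eta> (int (ell i))"

lemma Jid_eq_fixed_E: "Jid q t n \<eta> (int (ell i)) = {c \<in> vecs (Fsub (q ^ t)) n. rmul n (E i) c = c}"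
  unfolding E_def by (rule Jid_eq)

lemma Kid_eq_fixed_E: "Kid q n \<eta> (int (ell i)) = {c \<in> vecs (Fsub q) n. rmul n (E i) c = c}"
  unfolding E_def by (rule Kid_eq)

lemma mem_J_iff: "c \<in> J t i \<longleftrightarrow> c \<in> vecs (Fsub (q ^ t)) n \<and> rmul n (E i) c = c"
  using Jid_eq_fixed_E by blast

lemma mem_K_iff: "c \<in> K i \<longleftrightarrow> c \<in> vecs (Fsub q) n \<and> rmul n (E i) c = c"
  using Kid_eq_fixed_E by blast

lemma J_subset_vecs: "c \<in> J t i \<Longrightarrow> c \<in> vecs (Fsub (q ^ t)) n" using mem_J_iff by blast

lemma zvec_in_J: "zvec \<in> J t i" unfolding mem_J_iff by (simp add: zvec_in_vecs rmul_zvec_right)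

lemma rmul_E_in_J: "c \<in> vecs (Fsub (q ^ t)) n \<Longrightarrow> rmul n (E i) c \<in> J t i"
  unfolding mem_J_iff using rmul_in_vecs[OF E_in_vecs] rmul_E_idem by blast

lemma add_in_J: "a \<in> J t i \<Longrightarrow> b \<in> J t i \<Longrightarrow> (\<lambda>k. a k + b k) \<in> J t i"
  unfolding mem_J_iff by (simp add: add_in_vecs rmul_add_right)

lemma rmul_in_J:
  assumes x: "x \<in> vecs (Fsub q) n" and a: "a \<in> J t i"
  shows "rmul n x a \<in> J t i"
proof -
  have "a \<in> vecs (Fsub (q ^ t)) n" "rmul n (E i) a = a" using a mem_J_iff by auto
  moreover have "rmul n (E i) (rmul n x a) = rmul n x (rmul n (E i) a)" by (rule rmul_left_commute)
  ultimately show ?thesis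
    unfolding mem_J_iff using rmul_in_vecs[OF vecs_Fq_into_power[OF x]] by simp
qed

lemma rmul_E_in_K:
  assumes x: "x \<in> vecs (Fsub q) n"
  shows "rmul n x (E i) \<in> K i"
proof -
  have "rmul n x (E i) \<in> vecs (Fsub q) n"
    using rmul_in_vecs[of x 1 "E i"] x E_in_vecs_Fq by simp
  moreover have "rmul n (E i) (rmul n x (E i)) = rmul n x (rmul n (E i) (E i))"
    by (rule rmul_left_commute)
  then have "rmul n (E i) (rmul n x (E i)) = rmul n x (E i)" by (simp only: E_idem)
  ultimately show ?thesis unfolding mem_K_iff by simp
qed

lemma ksub_rmul_closed:
  assumes D: "ksub n (K i) (J t i) D" and x: "x \<in> vecs (Fsub q) n" and d: "d \<in> D"
  shows "rmul n x d \<in> D"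
proof -
  have "d \<in> J t i" using D d unfolding ksub_def by blast
  then have "rmul n (E i) d = d" using mem_J_iff by blast
  then have "rmul n x d = rmul n (rmul n x (E i)) d" by (simp only: rmul_assoc)
  then show ?thesis using D d rmul_E_in_K[OF x] unfolding ksub_def by simp
qed

lemma vform_rmul_E_adjoint:
  assumes i: "i < s" and a: "in_Rn a" and c: "in_Rn c"
  shows "vform q t n \<delta> (rmul n (E i) a) c = vform q t n \<delta> a (rmul n (E (\<mu> i)) c)"
proof -
  let ?W = "\<lambda>x. (\<lambda>j. twist t \<delta> (x j))"
  have sW: "in_Rn (?W c)" using c by (rule in_Rn_twist)
  have "(\<Sum>j<n. rmul n (E i) a j * ?W c j) = inverse (of_nat n) * (\<Sum>k<n. dft (?W c) k * dft (rmul n (E i) a) ((n - k) mod n))"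
    by (rule parseval[OF sW])
  also have "\<dots> = inverse (of_nat n) * (\<Sum>k<n. dft (rmul n (E (\<mu> i)) (?W c)) k * dft a ((n - k) mod n))"
  proof (intro arg_cong[where f="\<lambda>x. inverse (of_nat n) * x"] sum.cong refl)
    fix k assume "k \<in> {..<n}"
    then have k: "k < n" by simp
    have nk: "(n - k) mod n < n" using n_ge_1 by simp
    have iff: "(n - k) mod n \<in> coset (int (ell i)) \<longleftrightarrow> k \<in> coset (int (ell (\<mu> i)))"
      using mem_coset_mu_iff[OF i nk] diff_mod_diff_mod[OF k] by simp
    show "dft (?W c) k * dft (rmul n (E i) a) ((n - k) mod n) = dft (rmul n (E (\<mu> i)) (?W c)) k * dft a ((n - k) mod n)"
      unfolding dft_rmul dft_E[OF k] dft_E[OF nk] using iff by simp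
  qed
  also have "\<dots> = (\<Sum>j<n. a j * rmul n (E (\<mu> i)) (?W c) j)"
    by (rule parseval[symmetric]) (rule in_Rn_rmul)
  also have "rmul n (E (\<mu> i)) (?W c) = ?W (rmul n (E (\<mu> i)) c)"
    by (rule twist_rmul[symmetric]) (rule E_in_vecs_Fq)
  finally show ?thesis unfolding vform_eq_trace_twist by simp
qed

lemma rmul_E_in_dual:
  fixes C :: "(nat \<Rightarrow> 'e) set"
  assumes C: "cyclic_code q t n C" and i: "i < s" and a: "a \<in> dual q t n \<delta> C"
  shows "rmul n (E i) a \<in> dual q t n \<delta> C"
proof -
  have av: "a \<in> vecs (Fsub (q ^ t)) n" using a by (simp add: dual_def)
  have "vform q t n \<delta> (rmul n (E i) a) c = 0" if c: "c \<in> C" for c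
  proof -
    have "in_Rn c" using c cyclic_code_subset_vecs[OF C] vecs_in_Rn by blast
    then have "vform q t n \<delta> (rmul n (E i) a) c = vform q t n \<delta> a (rmul n (E (\<mu> i)) c)"
      using vform_rmul_E_adjoint[OF i vecs_in_Rn[OF av]] by blast
    also have "\<dots> = 0" using a cyclic_code_rmul[OF C E_in_vecs_Fq c] by (simp add: dual_def)
    finally show ?thesis .
  qed
  then show ?thesis using J_subset_vecs[OF rmul_E_in_J[OF av]] by (simp add: dual_def)
qed

lemma lcd_iff_components:
  fixes C :: "(nat \<Rightarrow> 'e) set"
  assumes C: "cyclic_code q t n C"
  shows "lcd q t n \<delta> C \<longleftrightarrow> (\<forall>i<s. (C \<inter> J t i) \<inter> (dual q t n \<delta> C \<inter> J t i) = {zvec})"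
proof
  assume "lcd q t n \<delta> C"
  then show "\<forall>i<s. (C \<inter> J t i) \<inter> (dual q t n \<delta> C \<inter> J t i) = {zvec}"
    using cyclic_code_zvec[OF C] zvec_in_dual zvec_in_J unfolding lcd_def by blast
next
  assume components: "\<forall>i<s. (C \<inter> J t i) \<inter> (dual q t n \<delta> C \<inter> J t i) = {zvec}"
  have "a = zvec" if a: "a \<in> C" "a \<in> dual q t n \<delta> C" for a
  proof -
    have av: "a \<in> vecs (Fsub (q ^ t)) n" using a cyclic_code_subset_vecs[OF C] by blast
    have "rmul n (E i) a = zvec" if i: "i < s" for i
      using components i cyclic_code_rmul[OF C E_in_vecs_Fq a(1)] rmul_E_in_J[OF av]
        rmul_E_in_dual[OF C i a(2)] by blast
    then have "a = (\<lambda>k. \<Sum>i<s. zvec k)" using sum_E_decomposition[OF vecs_in_Rn[OF av]] by simp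
    then show ?thesis by (simp add: zvec_def)
  qed
  then show "lcd q t n \<delta> C" unfolding lcd_def using cyclic_code_zvec[OF C] zvec_in_dual by blast
qed

lemma dual_inter_J:
  fixes C :: "(nat \<Rightarrow> 'e) set"
  assumes C: "cyclic_code q t n C" and i: "i < s"
  shows "dual q t n \<delta> C \<inter> J t i = ldual q t n \<delta> (J t i) (C \<inter> J t (\<mu> i))"
proof -
  have "(\<forall>c\<in>C. vform q t n \<delta> a c = 0) \<longleftrightarrow> (\<forall>c\<in>C \<inter> J t (\<mu> i). vform q t n \<delta> a c = 0)"
    if a: "a \<in> J t i" for a
  proof
    assume orth: "\<forall>c\<in>C \<inter> J t (\<mu> i). vform q t n \<delta> a c = 0"
    have av: "a \<in> vecs (Fsub (q ^ t)) n" and "rmul n (E i) a = a" using a mem_J_iff by auto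
    have "vform q t n \<delta> a c = 0" if c: "c \<in> C" for c
    proof -
      have cv: "c \<in> vecs (Fsub (q ^ t)) n" using c cyclic_code_subset_vecs[OF C] by blast
      have "vform q t n \<delta> a c = vform q t n \<delta> (rmul n (E i) a) c" using \<open>rmul n (E i) a = a\<close> by simp
      also have "\<dots> = vform q t n \<delta> a (rmul n (E (\<mu> i)) c)"
        using vform_rmul_E_adjoint[OF i vecs_in_Rn[OF av] vecs_in_Rn[OF cv]] .
      also have "\<dots> = 0"
        using orth cyclic_code_rmul[OF C E_in_vecs_Fq c] rmul_E_in_J[OF cv] by blast
      finally show ?thesis .
    qed
    then show "\<forall>c\<in>C. vform q t n \<delta> a c = 0" by blast
  qed blast
  moreover have "(\<forall>c\<in>C \<inter> J t (\<mu> i). bform q t n \<delta> a c = zvec) \<longleftrightarrow>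
      (\<forall>c\<in>C \<inter> J t (\<mu> i). vform q t n \<delta> a c = 0)" for a
  proof (rule all_bform_eq_zvec_iff)
    show "cshift n c \<in> C \<inter> J t (\<mu> i)" if c: "c \<in> C \<inter> J t (\<mu> i)" for c
    proof -
      have "cshift n unit_vec \<in> vecs (Fsub q) n"
        using cshift_in_vecs[of unit_vec 1] unit_vec_in_vecs_Fq by simp
      moreover have "cshift n c = rmul n (cshift n unit_vec) c"
        using c J_subset_vecs vecs_in_Rn cshift_eq_rmul by blast
      ultimately have "cshift n c \<in> J t (\<mu> i)" using c rmul_in_J by auto
      then show ?thesis using c cyclic_code_cshift[OF C] by blast
    qed
    show "in_Rn c" if "c \<in> C \<inter> J t (\<mu> i)" for c
      using that J_subset_vecs vecs_in_Rn by blast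
  qed
  ultimately show ?thesis
    by (auto simp: dual_def ldual_def J_subset_vecs)
qed

lemma lcd_iff_local_duals:
  fixes C :: "(nat \<Rightarrow> 'e) set"
  assumes C: "cyclic_code q t n C"
  shows "lcd q t n \<delta> C \<longleftrightarrow> (\<forall>i<s. (C \<inter> J t i) \<inter> ldual q t n \<delta> (J t i) (C \<inter> J t (\<mu> i)) = {zvec})"
  using lcd_iff_components[OF C] dual_inter_J[OF C] by (simp add: Int_assoc)

lemma ksub_cyclic_code_inter_J:
  fixes C :: "(nat \<Rightarrow> 'e) set"
  assumes C: "cyclic_code q t n C"
  shows "ksub n (K i) (J t i) (C \<inter> J t i)"
  unfolding ksub_def
proof (intro conjI ballI)
  show "zvec \<in> C \<inter> J t i" using cyclic_code_zvec[OF C] zvec_in_J by blast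
  show "(\<lambda>k. a k + b k) \<in> C \<inter> J t i" if "a \<in> C \<inter> J t i" "b \<in> C \<inter> J t i" for a b
    using that cyclic_code_add[OF C] add_in_J by blast
  show "rmul n x a \<in> C \<inter> J t i" if "x \<in> K i" "a \<in> C \<inter> J t i" for x a
    using that cyclic_code_rmul[OF C] rmul_in_J mem_K_iff by blast
qed blast

definition assemble :: "nat \<Rightarrow> (nat \<Rightarrow> (nat \<Rightarrow> 'e) set) \<Rightarrow> (nat \<Rightarrow> 'e) set" where
  "assemble t D = {c \<in> vecs (Fsub (q ^ t)) n. \<forall>i<s. rmul n (E i) c \<in> D i}"

lemma cyclic_code_eq_assemble:
  fixes C :: "(nat \<Rightarrow> 'e) set"
  assumes C: "cyclic_code q t n C"
  shows "C = assemble t (\<lambda>i. C \<inter> J t i)"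
  unfolding assemble_def set_eq_iff
proof (intro allI iffI)
  fix c assume c: "c \<in> C"
  have cv: "c \<in> vecs (Fsub (q ^ t)) n" using c cyclic_code_subset_vecs[OF C] by blast
  show "c \<in> {c \<in> vecs (Fsub (q ^ t)) n. \<forall>i<s. rmul n (E i) c \<in> C \<inter> J t i}"
    using cv cyclic_code_rmul[OF C E_in_vecs_Fq c] rmul_E_in_J[OF cv] by blast
next
  fix c assume c: "c \<in> {c \<in> vecs (Fsub (q ^ t)) n. \<forall>i<s. rmul n (E i) c \<in> C \<inter> J t i}"
  then have "c = (\<lambda>k. \<Sum>i<s. rmul n (E i) c k)" using sum_E_decomposition vecs_in_Rn by blast
  also have "\<dots> \<in> C" by (rule cyclic_code_sum[OF C]) (use c in auto)
  finally show "c \<in> C" .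
qed

lemma cyclic_code_assemble:
  assumes D: "\<And>i. i < s \<Longrightarrow> ksub n (K i) (J t i) (D i)"
  shows "cyclic_code q t n (assemble t D)"
proof (rule cyclic_codeI)
  show "assemble t D \<subseteq> vecs (Fsub (q ^ t)) n" by (auto simp: assemble_def)
  show "zvec \<in> assemble t D"
    using D by (auto simp: assemble_def ksub_def zvec_in_vecs rmul_zvec_right)
  show "(\<lambda>k. a k + b k) \<in> assemble t D" if "a \<in> assemble t D" "b \<in> assemble t D" for a b
    using that D by (auto simp: assemble_def ksub_def add_in_vecs rmul_add_right)
  show "rmul n x a \<in> assemble t D" if x: "x \<in> vecs (Fsub q) n" and a: "a \<in> assemble t D" for x a
  proof -
    have "rmul n (E i) (rmul n x a) \<in> D i" if "i < s" for i
      using ksub_rmul_closed[OF D[OF that] x] a that rmul_left_commute[of "E i" x a]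
      by (simp add: assemble_def)
    then show ?thesis
      using a rmul_in_vecs[OF vecs_Fq_into_power[OF x]] by (simp add: assemble_def)
  qed
qed

lemma assemble_inter_J:
  assumes D: "\<And>i. i < s \<Longrightarrow> ksub n (K i) (J t i) (D i)" and i: "i < s"
  shows "assemble t D \<inter> J t i = D i"
  unfolding set_eq_iff
proof (intro allI iffI)
  fix c assume c: "c \<in> assemble t D \<inter> J t i"
  then have "rmul n (E i) c = c" using mem_J_iff by blast
  moreover have "rmul n (E i) c \<in> D i" using c i unfolding assemble_def by auto
  ultimately show "c \<in> D i" by simp
next
  fix c assume c: "c \<in> D i"
  then have cJ: "c \<in> J t i" using D[OF i] unfolding ksub_def by blast
  then have cv: "c \<in> vecs (Fsub (q ^ t)) n" and ce: "rmul n (E i) c = c" using mem_J_iff by auto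
  have "rmul n (E j) c \<in> D j" if j: "j < s" for j
  proof (cases "j = i")
    case True then show ?thesis using ce c by simp
  next
    case False
    have "rmul n (E j) c = rmul n (rmul n (E j) (E i)) c" using ce by (simp add: rmul_assoc)
    also have "\<dots> = zvec" using E_orthogonal[OF j i False] by (simp add: rmul_zvec_left)
    finally show ?thesis using D[OF j] unfolding ksub_def by simp
  qed
  then show "c \<in> assemble t D \<inter> J t i" unfolding assemble_def using cv cJ by auto
qed

lemma bij_betw_components:
  "bij_betw (\<lambda>C. restrict (\<lambda>i. C \<inter> J t i) {..<s}) {C :: (nat \<Rightarrow> 'e) set. cyclic_code q t n C}
     (PiE {..<s} (\<lambda>i. {D. ksub n (K i) (J t i) D}))"
proof (rule bij_betw_byWitness[where f' = "assemble t"])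
  have "assemble t (restrict f {..<s}) = assemble t f" for f
    by (simp add: assemble_def)
  then show "\<forall>C\<in>{C. cyclic_code q t n C}. assemble t (restrict (\<lambda>i. C \<inter> J t i) {..<s}) = C"
    using cyclic_code_eq_assemble by auto
  show "\<forall>D\<in>PiE {..<s} (\<lambda>i. {D. ksub n (K i) (J t i) D}).
      restrict (\<lambda>i. assemble t D \<inter> J t i) {..<s} = D"
    using assemble_inter_J by (auto simp: PiE_def extensional_def fun_eq_iff)
  show "(\<lambda>C. restrict (\<lambda>i. C \<inter> J t i) {..<s}) ` {C. cyclic_code q t n C}
      \<subseteq> PiE {..<s} (\<lambda>i. {D. ksub n (K i) (J t i) D})"
    using ksub_cyclic_code_inter_J by auto
  show "assemble t ` PiE {..<s} (\<lambda>i. {D. ksub n (K i) (J t i) D}) \<subseteq> {C. cyclic_code q t n C}"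
    using cyclic_code_assemble by auto
qed

lemma card_lcd_codes_eq_card_families:
  "card {C :: (nat \<Rightarrow> 'e) set. cyclic_code q t n C \<and> lcd q t n \<delta> C}
   = card {f \<in> PiE {..<s} (\<lambda>i. {D. ksub n (K i) (J t i) D}).
        \<forall>i\<in>{..<s}. f i \<inter> ldual q t n \<delta> (J t i) (f (\<mu> i)) = {zvec}}"
proof -
  have "bij_betw (\<lambda>C. restrict (\<lambda>i. C \<inter> J t i) {..<s})
      {C \<in> {C. cyclic_code q t n C}. lcd q t n \<delta> C}
      {f \<in> PiE {..<s} (\<lambda>i. {D. ksub n (K i) (J t i) D}).
        \<forall>i\<in>{..<s}. f i \<inter> ldual q t n \<delta> (J t i) (f (\<mu> i)) = {zvec}}"
    by (rule bij_betw_Collect[OF bij_betw_components]) (simp add: lcd_iff_local_duals mu_less_s Ball_def)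
  then show ?thesis by (simp add: bij_betw_same_card)
qed

lemma card_lcd_codes:
  assumes M_moved: "M \<subseteq> {i. i < s \<and> \<mu> i \<noteq> i}"
    and M_transversal: "\<forall>i<s. \<mu> i \<noteq> i \<longrightarrow> (i \<in> M \<longleftrightarrow> \<mu> i \<notin> M)"
  shows "card {C :: (nat \<Rightarrow> 'e) set. cyclic_code q t n C \<and> lcd q t n \<delta> C}
         = (\<Prod>i\<in>Fset q n s ell \<union> Iset q n s ell. Nfix q t n \<delta> \<eta> (int (ell i)))
           * (\<Prod>h\<in>M. Npair q t n \<delta> \<eta> (int (ell h)) (int (ell (\<mu> h))))"
proof -
  interpret involution_transversal "{..<s}" \<mu> M
  proof
    show "\<And>i. i \<in> {..<s} \<Longrightarrow> \<mu> i \<in> {..<s} \<and> \<mu> (\<mu> i) = i"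
      using mu_less_s mu_mu by simp
    show "M \<subseteq> {i \<in> {..<s}. \<mu> i \<noteq> i}" using M_moved by auto
    show "\<And>i. i \<in> {..<s} \<Longrightarrow> \<mu> i \<noteq> i \<Longrightarrow> i \<in> M \<longleftrightarrow> \<mu> i \<notin> M"
      using M_transversal by blast
  qed simp
  have "Fset q n s ell \<union> Iset q n s ell = fixed"
    using Iset_subset_fixed_points unfolding Fset_def by auto
  then show ?thesis
    using card_constrained_PiE[of "\<lambda>i. {D. ksub n (K i) (J t i) D}"
        "\<lambda>i D E. D \<inter> ldual q t n \<delta> (J t i) E = {zvec}"]
    unfolding card_lcd_codes_eq_card_families Nfix_def Npair_def by simp
qed

end

theorem proposition3p1:
  fixes p q k n t s :: nat and \<eta> :: "'e::field" and ell :: "nat \<Rightarrow> nat"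
    and \<delta> :: "'e form_kind" and M :: "nat set"
  assumes "prime p" and "k \<ge> 1" and "q = p ^ k" and "of_nat p = (0::'e)"
    and "n \<ge> 1" and "coprime n q"
    and "card (Fsub (q ^ t) :: 'e set) = q ^ t"
    and "\<eta> ^ n = 1" and "\<forall>j. 0 < j \<and> j < n \<longrightarrow> \<eta> ^ j \<noteq> 1"
    and "ell 0 = 0" and "\<forall>i<s. ell i < n"
    and "\<forall>i<s. \<forall>j<s. cyc_coset q n (int (ell i)) = cyc_coset q n (int (ell j)) \<longrightarrow> i = j"
    and "\<forall>m<n. \<exists>i<s. m \<in> cyc_coset q n (int (ell i))"
    and "in_T p q t \<delta>"
    and "M \<subseteq> {i. i < s \<and> mu q n s ell i \<noteq> i}"
    and "\<forall>i<s. mu q n s ell i \<noteq> i \<longrightarrow> (i \<in> M \<longleftrightarrow> mu q n s ell i \<notin> M)"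
  shows "(\<forall>C. cyclic_code q t n C \<longrightarrow>
            (lcd q t n \<delta> C \<longleftrightarrow>
              (\<forall>i<s. (C \<inter> Jid q t n \<eta> (int (ell i))) \<inter> (dual q t n \<delta> C \<inter> Jid q t n \<eta> (int (ell i)))
                       = {zvec})))
       \<and> card {C :: (nat \<Rightarrow> 'e) set. cyclic_code q t n C \<and> lcd q t n \<delta> C}
         = (\<Prod>i\<in>Fset q n s ell \<union> Iset q n s ell. Nfix q t n \<delta> \<eta> (int (ell i)))
           * (\<Prod>h\<in>M. Npair q t n \<delta> \<eta> (int (ell h)) (int (ell (mu q n s ell h))))"
proof -
  interpret coset_decomposition p q k n \<eta> s ell
    using assms by unfold_locales auto
  show ?thesis
    using lcd_iff_components card_lcd_codes assms(15,16) by blast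
qed

end
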